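(* Let $K$ be a ramified quadratic extension of $\mathbb{Q}_2$, $d=2m$ with $m$ odd, $m\ge3$, and $f=a_1x_1^d+\dots+a_sx_s^d$ with all $a_i\in\mathcal{O}\setminus\{0\}$. Suppose that for some level $k$, $f$ has four distinct variables at level $k$ that can be split into two disjoint pairs, each pair consisting of two variables with the same $\pi$-coefficient, and that $f$ has a variable in at least one of the levels $k+2$, $k+3$, $k+4$. Then $f$ has a nontrivial zero in $K$.
   Context: $\mathcal{O}$ is the ring of integers of $K$ and $\pi$ the uniformizer: $\pi=\sqrt{2},\sqrt{-2},\sqrt{10},\sqrt{-10},1+\sqrt{-1},1+\sqrt{-5}$ for $K=\mathbb{Q}_2(\sqrt2),\mathbb{Q}_2(\sqrt{-2}),\mathbb{Q}_2(\sqrt{10}),\mathbb{Q}_2(\sqrt{-10}),\mathbb{Q}_2(\sqrt{-1}),\mathbb{Q}_2(\sqrt{-5})$ respectively. Each unit $u$ has a unique expansion $u=c_0+c_1\pi+c_2\pi^2+\cdots$ with $c_j\in\{0,1\}$, $c_0=1$. Writing $a_i=\pi^r u$ with $u$ a unit, the variable $x_i$ is at level $r\bmod d$ (levels are residues modulo $d$), and its $\pi$-coefficient is $c_1$ of $u$. A nontrivial zero is a point of $K^s$, not all coordinates zero, where $f$ vanishes. *)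

theory Defs
  imports Main
begin

type_synonym z2 = "nat \<Rightarrow> int"

definition Z2 :: "z2 set" where
  "Z2 = {x. \<forall>n. 0 \<le> x n \<and> x n < 2 ^ n \<and> x (Suc n) mod 2 ^ n = x n}"

definition z2_of_int :: "int \<Rightarrow> z2" where
  "z2_of_int k = (\<lambda>n. k mod 2 ^ n)"

definition z2_add :: "z2 \<Rightarrow> z2 \<Rightarrow> z2" where
  "z2_add x y = (\<lambda>n. (x n + y n) mod 2 ^ n)"

definition z2_mul :: "z2 \<Rightarrow> z2 \<Rightarrow> z2" where
  "z2_mul x y = (\<lambda>n. (x n * y n) mod 2 ^ n)"

definition z2_neg :: "z2 \<Rightarrow> z2" where
  "z2_neg x = (\<lambda>n. (- x n) mod 2 ^ n)"

text \<open>An element (a, b) stands for a + b pi. The parameter P = (tr, nm) gives the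
minimal polynomial X^2 - tr X + nm of the uniformizer pi over Q_2.\<close>

type_synonym oelt = "z2 \<times> z2"

definition O_carrier :: "oelt set" where
  "O_carrier = Z2 \<times> Z2"

definition o_zero :: oelt where "o_zero = (z2_of_int 0, z2_of_int 0)"
definition o_one :: oelt where "o_one = (z2_of_int 1, z2_of_int 0)"
definition o_pi :: oelt where "o_pi = (z2_of_int 0, z2_of_int 1)"

definition o_add :: "oelt \<Rightarrow> oelt \<Rightarrow> oelt" where
  "o_add u v = (z2_add (fst u) (fst v), z2_add (snd u) (snd v))"

definition o_neg :: "oelt \<Rightarrow> oelt" where
  "o_neg u = (z2_neg (fst u), z2_neg (snd u))"

definition o_sub :: "oelt \<Rightarrow> oelt \<Rightarrow> oelt" where
  "o_sub u v = o_add u (o_neg v)"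

definition o_mul :: "int \<times> int \<Rightarrow> oelt \<Rightarrow> oelt \<Rightarrow> oelt" where
  "o_mul P u v =
     (let a = fst u; b = snd u; c = fst v; e = snd v; bd = z2_mul b e in
      (z2_add (z2_mul a c) (z2_neg (z2_mul (z2_of_int (snd P)) bd)),
       z2_add (z2_add (z2_mul a e) (z2_mul b c)) (z2_mul (z2_of_int (fst P)) bd)))"

primrec o_pow :: "int \<times> int \<Rightarrow> oelt \<Rightarrow> nat \<Rightarrow> oelt" where
  "o_pow P u 0 = o_one"
| "o_pow P u (Suc n) = o_mul P (o_pow P u n) u"

primrec o_sum :: "(nat \<Rightarrow> oelt) \<Rightarrow> nat \<Rightarrow> oelt" where
  "o_sum f 0 = o_zero"
| "o_sum f (Suc n) = o_add (o_sum f n) (f n)"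

definition o_unit :: "int \<times> int \<Rightarrow> oelt \<Rightarrow> bool" where
  "o_unit P u \<longleftrightarrow> u \<in> O_carrier \<and> (\<exists>v\<in>O_carrier. o_mul P u v = o_one)"

definition o_dvd :: "int \<times> int \<Rightarrow> oelt \<Rightarrow> oelt \<Rightarrow> bool" where
  "o_dvd P u v \<longleftrightarrow> (\<exists>w\<in>O_carrier. v = o_mul P u w)"

text \<open>The six ramified quadratic extensions of Q_2 of the context, via the minimal
polynomial X^2 - tr X + nm of their uniformizer:
 sqrt 2: X^2-2; sqrt(-2): X^2+2; sqrt 10: X^2-10; sqrt(-10): X^2+10;
 1+sqrt(-1): X^2-2X+2; 1+sqrt(-5): X^2-2X+6.\<close>

definition ramified_params :: "(int \<times> int) set" where
  "ramified_params = {(0, -2), (0, 2), (0, -10), (0, 10), (2, 2), (2, 6)}"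

text \<open>pi-coefficient c1 of a unit u = c0 + c1 pi + ... (c0 = 1): the unique c in {0,1}
with u == 1 + c pi mod pi^2.\<close>

definition pi_coeff :: "int \<times> int \<Rightarrow> oelt \<Rightarrow> nat \<Rightarrow> bool" where
  "pi_coeff P u c \<longleftrightarrow> c \<in> {0, 1} \<and>
     o_dvd P (o_pow P o_pi 2) (o_sub u (o_add o_one (o_mul P (z2_of_int (int c), z2_of_int 0) o_pi)))"

definition level_coeff :: "int \<times> int \<Rightarrow> nat \<Rightarrow> oelt \<Rightarrow> nat \<Rightarrow> nat \<Rightarrow> bool" where
  "level_coeff P d a k c \<longleftrightarrow>
     (\<exists>r u. o_unit P u \<and> a = o_mul P (o_pow P o_pi r) u \<and> r mod d = k \<and> pi_coeff P u c)"

definition at_level :: "int \<times> int \<Rightarrow> nat \<Rightarrow> oelt \<Rightarrow> nat \<Rightarrow> bool" where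
  "at_level P d a k \<longleftrightarrow> (\<exists>c. level_coeff P d a k c)"

end

theory Submission
  imports Defs
begin

text \<open>Write the five relevant coefficients as pi^r u with u a unit. Substituting x = pi^t y with
suitable exponents t pulls out a common power of pi and leaves the unit form
u0 y0^d + u1 y1^d + u2 y2^d + u3 y3^d + pi^j u4 y4^d with 2 <= j <= 4. As d = 2 mod 4 and
(1 + pi)^4 = 1 mod pi^5, the d-th power of 0, 1 or 1 + pi is 0, 1 or (1 + pi)^2 modulo pi^5, and a
finite search over the residues of the coefficients modulo pi^5, done once for each of the six
fields, yields a zero modulo pi^5 in which some y_h with h < 4 is a unit. Finally
(y (1 + 2 pi z))^d = y^d (1 + 4 pi H(z)) where H(z) = m z (mod pi) has unit slope since m is odd,
so this approximate zero lifts, Hensel-style, to an exact one.\<close>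

section \<open>The quadratic orders Z[pi]\<close>

text \<open>For P = (tr, nm), quad_mult P multiplies a + b X and c + e X in Z[X]/(X^2 - tr X + nm).
The type zpi is the product of all these rings over P; bundling them into one type yields a
comm_ring_1 instance without fixing the parameter, and coords P projects to the P-th factor.\<close>

definition quad_mult :: "int \<times> int \<Rightarrow> int \<times> int \<Rightarrow> int \<times> int \<Rightarrow> int \<times> int" where
  "quad_mult P u v = (fst u * fst v - snd P * (snd u * snd v),
                      fst u * snd v + snd u * fst v + fst P * (snd u * snd v))"

typedef zpi = "UNIV :: (int \<times> int \<Rightarrow> int \<times> int) set" by auto

instantiation zpi :: comm_ring_1
begin
definition "zero_zpi = Abs_zpi (\<lambda>Q. (0, 0))"
definition "one_zpi = Abs_zpi (\<lambda>Q. (1, 0))"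
definition "plus_zpi x y =
  Abs_zpi (\<lambda>Q. (fst (Rep_zpi x Q) + fst (Rep_zpi y Q), snd (Rep_zpi x Q) + snd (Rep_zpi y Q)))"
definition "minus_zpi x y =
  Abs_zpi (\<lambda>Q. (fst (Rep_zpi x Q) - fst (Rep_zpi y Q), snd (Rep_zpi x Q) - snd (Rep_zpi y Q)))"
definition "uminus_zpi x = Abs_zpi (\<lambda>Q. (- fst (Rep_zpi x Q), - snd (Rep_zpi x Q)))"
definition "times_zpi x y = Abs_zpi (\<lambda>Q. quad_mult Q (Rep_zpi x Q) (Rep_zpi y Q))"
instance
proof
  fix a b c :: zpi
  show "a + b + c = a + (b + c)"
    by (simp add: plus_zpi_def Abs_zpi_inverse algebra_simps)
  show "a + b = b + a"
    by (simp add: plus_zpi_def add.commute)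
  show "0 + a = a"
    by (simp add: plus_zpi_def zero_zpi_def Abs_zpi_inverse Rep_zpi_inverse)
  show "- a + a = 0"
    by (simp add: plus_zpi_def zero_zpi_def uminus_zpi_def Abs_zpi_inverse)
  show "a - b = a + - b"
    by (simp add: plus_zpi_def minus_zpi_def uminus_zpi_def Abs_zpi_inverse)
  show "a * b * c = a * (b * c)"
    by (simp add: times_zpi_def Abs_zpi_inverse quad_mult_def algebra_simps)
  show "a * b = b * a"
    by (simp add: times_zpi_def quad_mult_def algebra_simps)
  show "1 * a = a"
    by (simp add: times_zpi_def one_zpi_def Abs_zpi_inverse quad_mult_def Rep_zpi_inverse)
  show "(a + b) * c = a * c + b * c"
    by (simp add: times_zpi_def plus_zpi_def Abs_zpi_inverse quad_mult_def algebra_simps)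
  show "(0::zpi) \<noteq> 1"
    by (simp add: zero_zpi_def one_zpi_def Abs_zpi_inject fun_eq_iff)
qed
end

definition coords :: "int \<times> int \<Rightarrow> zpi \<Rightarrow> int \<times> int" where
  "coords P x = Rep_zpi x P"

definition zpi_of :: "int \<times> int \<Rightarrow> zpi" where
  "zpi_of r = Abs_zpi (\<lambda>Q. r)"

definition \<pi> :: zpi where
  "\<pi> = zpi_of (0, 1)"

lemma coords_add [simp]:
  "coords P (x + y) = (fst (coords P x) + fst (coords P y), snd (coords P x) + snd (coords P y))"
  by (simp add: coords_def plus_zpi_def Abs_zpi_inverse)

lemma coords_diff [simp]:
  "coords P (x - y) = (fst (coords P x) - fst (coords P y), snd (coords P x) - snd (coords P y))"
  by (simp add: coords_def minus_zpi_def Abs_zpi_inverse)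

lemma coords_uminus [simp]: "coords P (- x) = (- fst (coords P x), - snd (coords P x))"
  by (simp add: coords_def uminus_zpi_def Abs_zpi_inverse)

lemma coords_mult [simp]: "coords P (x * y) = quad_mult P (coords P x) (coords P y)"
  by (simp add: coords_def times_zpi_def Abs_zpi_inverse)

lemma coords_zero [simp]: "coords P 0 = (0, 0)"
  by (simp add: coords_def zero_zpi_def Abs_zpi_inverse)

lemma coords_one [simp]: "coords P 1 = (1, 0)"
  by (simp add: coords_def one_zpi_def Abs_zpi_inverse)

lemma coords_zpi_of [simp]: "coords P (zpi_of r) = r"
  by (simp add: coords_def zpi_of_def Abs_zpi_inverse)

lemma coords_of_nat [simp]: "coords P (of_nat k) = (int k, 0)"
  by (induction k) (simp_all add: quad_mult_def)

lemma coords_of_int [simp]: "coords P (of_int k) = (k, 0)"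
  by (cases k rule: int_cases) (simp_all add: quad_mult_def)

lemma coords_numeral [simp]: "coords P (numeral k) = (numeral k, 0)"
  using coords_of_nat[of P "numeral k"] by simp

lemma coords_of_int_power: "coords P (of_int k ^ r) = (k ^ r, 0)"
  by (induction r) (simp_all add: quad_mult_def)

lemma zpi_eqI: "(\<And>Q. coords Q x = coords Q y) \<Longrightarrow> x = y"
  unfolding coords_def by (metis Rep_zpi_inject ext)

lemma zpi_of_zero [simp]: "zpi_of (0, 0) = 0"
  by (rule zpi_eqI) simp

lemma zpi_of_one [simp]: "zpi_of (1, 0) = 1"
  by (rule zpi_eqI) simp

section \<open>Congruences modulo ideals\<close>

definition cong_mod :: "'a::comm_ring_1 set \<Rightarrow> 'a \<Rightarrow> 'a \<Rightarrow> bool" where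
  "cong_mod I x y \<longleftrightarrow> x - y \<in> I"

lemma cong_mod_0_iff: "cong_mod I x 0 \<longleftrightarrow> x \<in> I"
  by (simp add: cong_mod_def)

locale ring_ideal =
  fixes I :: "'a::comm_ring_1 set"
  assumes zero_mem: "0 \<in> I"
    and add_mem: "x \<in> I \<Longrightarrow> y \<in> I \<Longrightarrow> x + y \<in> I"
    and mult_mem: "x \<in> I \<Longrightarrow> x * y \<in> I"
begin

lemma uminus_mem: "x \<in> I \<Longrightarrow> - x \<in> I"
  using mult_mem[of x "- 1"] by simp

lemma mult_mem_right: "y \<in> I \<Longrightarrow> x * y \<in> I"
  using mult_mem[of y x] by (simp add: mult.commute)

lemma cong_refl [simp]: "cong_mod I x x"
  by (simp add: cong_mod_def zero_mem)

lemma cong_sym: "cong_mod I x y \<Longrightarrow> cong_mod I y x"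
  using uminus_mem[of "x - y"] by (simp add: cong_mod_def)

lemma cong_trans [trans]: "cong_mod I x y \<Longrightarrow> cong_mod I y z \<Longrightarrow> cong_mod I x z"
  using add_mem[of "x - y" "y - z"] by (simp add: cong_mod_def)

lemma cong_add: "cong_mod I x y \<Longrightarrow> cong_mod I x' y' \<Longrightarrow> cong_mod I (x + x') (y + y')"
  using add_mem[of "x - y" "x' - y'"] by (simp add: cong_mod_def algebra_simps)

lemma cong_diff: "cong_mod I x y \<Longrightarrow> cong_mod I x' y' \<Longrightarrow> cong_mod I (x - x') (y - y')"
  using add_mem[of "x - y" "- (x' - y')"] uminus_mem[of "x' - y'"]
  by (simp add: cong_mod_def algebra_simps)

lemma cong_mult: "cong_mod I x y \<Longrightarrow> cong_mod I x' y' \<Longrightarrow> cong_mod I (x * x') (y * y')"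
  using add_mem[OF mult_mem[of "x - y" x'] mult_mem_right[of "x' - y'" y]]
  by (simp add: cong_mod_def algebra_simps)

lemma cong_mult_left: "cong_mod I x y \<Longrightarrow> cong_mod I (c * x) (c * y)"
  by (simp add: cong_mult)

lemma cong_power: "cong_mod I x y \<Longrightarrow> cong_mod I (x ^ k) (y ^ k)"
  by (induction k) (simp_all add: cong_mult)

lemma cong_sum: "(\<And>i. i \<in> A \<Longrightarrow> cong_mod I (f i) (g i)) \<Longrightarrow> cong_mod I (sum f A) (sum g A)"
  by (induction A rule: infinite_finite_induct) (simp_all add: cong_add)

end

definition multiples :: "int \<times> int \<Rightarrow> int \<Rightarrow> zpi set" where
  "multiples P k = {x. k dvd fst (coords P x) \<and> k dvd snd (coords P x)}"

interpretation multiples: ring_ideal "multiples P k"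
  by unfold_locales (auto simp: multiples_def quad_mult_def)

abbreviation cong_pow2 :: "int \<times> int \<Rightarrow> nat \<Rightarrow> zpi \<Rightarrow> zpi \<Rightarrow> bool" where
  "cong_pow2 P n \<equiv> cong_mod (multiples P (2 ^ n))"

lemma cong_pow2_iff:
  "cong_pow2 P n x y \<longleftrightarrow> fst (coords P x) mod 2 ^ n = fst (coords P y) mod 2 ^ n
                        \<and> snd (coords P x) mod 2 ^ n = snd (coords P y) mod 2 ^ n"
  by (simp add: cong_mod_def multiples_def mod_eq_dvd_iff)

lemma cong_pow2_mono: "n \<le> k \<Longrightarrow> cong_pow2 P k x y \<Longrightarrow> cong_pow2 P n x y"
  unfolding cong_mod_def multiples_def by (auto intro: dvd_trans[OF le_imp_power_dvd])

lemma cong_multiples_one [simp]: "cong_mod (multiples P 1) x y"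
  by (simp add: cong_mod_def multiples_def)

section \<open>Truncations of elements of O\<close>

definition trunc :: "nat \<Rightarrow> oelt \<Rightarrow> zpi" where
  "trunc n u = zpi_of (fst u n, snd u n)"

lemma coords_trunc [simp]: "coords P (trunc n u) = (fst u n, snd u n)"
  by (simp add: trunc_def)

lemma trunc_zero [simp]: "trunc n o_zero = 0"
  by (simp add: o_zero_def trunc_def z2_of_int_def)

lemma trunc_const: "cong_pow2 P n (trunc n (z2_of_int a, z2_of_int b)) (zpi_of (a, b))"
  by (simp add: cong_pow2_iff z2_of_int_def)

lemma trunc_one: "cong_pow2 P n (trunc n o_one) 1"
  using trunc_const[of P n 1 0] by (simp add: o_one_def)

lemma trunc_pi: "cong_pow2 P n (trunc n o_pi) \<pi>"
  using trunc_const[of P n 0 1] by (simp add: o_pi_def \<pi>_def)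

lemma trunc_add: "cong_pow2 P n (trunc n (o_add u v)) (trunc n u + trunc n v)"
  by (simp add: cong_pow2_iff o_add_def z2_add_def)

lemma trunc_neg: "cong_pow2 P n (trunc n (o_neg u)) (- trunc n u)"
  by (simp add: cong_pow2_iff o_neg_def z2_neg_def mod_simps)

lemma trunc_sub: "cong_pow2 P n (trunc n (o_sub u v)) (trunc n u - trunc n v)"
  unfolding o_sub_def diff_conv_add_uminus
  by (rule multiples.cong_trans[OF trunc_add multiples.cong_add[OF multiples.cong_refl trunc_neg]])

lemma trunc_mul: "cong_pow2 P n (trunc n (o_mul P u v)) (trunc n u * trunc n v)"
proof -
  let ?M = "(2::int) ^ n"
  have fst_mod: "((a * c) mod ?M + (- ((t mod ?M) * ((b * e) mod ?M) mod ?M)) mod ?M) mod ?M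
           = (a * c - t * (b * e)) mod ?M" for a b c e t :: int
    by (metis mod_add_eq mod_minus_eq mod_mult_eq diff_conv_add_uminus)
  have snd_mod: "(((a * e) mod ?M + (b * c) mod ?M) mod ?M + (t mod ?M) * ((b * e) mod ?M) mod ?M) mod ?M
           = (a * e + b * c + t * (b * e)) mod ?M" for a b c e t :: int
    by (metis mod_add_eq mod_mult_eq)
  show ?thesis
    by (simp add: cong_pow2_iff o_mul_def z2_add_def z2_mul_def z2_neg_def z2_of_int_def
        Let_def quad_mult_def fst_mod snd_mod)
qed

lemma trunc_pow: "cong_pow2 P n (trunc n (o_pow P u k)) (trunc n u ^ k)"
proof (induction k)
  case 0
  then show ?case by (simp add: trunc_one)
next
  case (Suc k)
  have "cong_pow2 P n (trunc n (o_mul P (o_pow P u k) u)) (trunc n u ^ k * trunc n u)"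
    by (rule multiples.cong_trans[OF trunc_mul multiples.cong_mult[OF Suc multiples.cong_refl]])
  then show ?case by (simp add: mult.commute)
qed

lemma trunc_sum: "cong_pow2 P n (trunc n (o_sum f k)) (\<Sum>i<k. trunc n (f i))"
proof (induction k)
  case (Suc k)
  then show ?case by (simp add: multiples.cong_trans[OF trunc_add multiples.cong_add])
qed simp

lemma trunc_pi_power_mul: "cong_pow2 P n (trunc n (o_mul P (o_pow P o_pi r) v)) (\<pi> ^ r * trunc n v)"
  by (rule multiples.cong_trans[OF trunc_mul multiples.cong_mult
        [OF multiples.cong_trans[OF trunc_pow multiples.cong_power[OF trunc_pi]] multiples.cong_refl]])

lemma Z2_step: "x \<in> Z2 \<Longrightarrow> x (Suc n) mod 2 ^ n = x n"
  unfolding Z2_def by blast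

lemma Z2_mod_self: "x \<in> Z2 \<Longrightarrow> x n mod 2 ^ n = x n"
  unfolding Z2_def by simp

lemma Z2_ofI:
  assumes "\<And>n. x (Suc n) mod 2 ^ n = x n mod 2 ^ n"
  shows "(\<lambda>n. x n mod 2 ^ n) \<in> Z2"
proof -
  have "x (Suc n) mod 2 ^ Suc n mod 2 ^ n = x n mod 2 ^ n" for n
    using assms[of n] by (simp add: mod_mod_cancel)
  then show ?thesis unfolding Z2_def by simp
qed

lemma z2_add_Z2: "x \<in> Z2 \<Longrightarrow> y \<in> Z2 \<Longrightarrow> z2_add x y \<in> Z2"
  unfolding z2_add_def by (rule Z2_ofI) (metis Z2_step mod_add_eq)

lemma z2_mul_Z2: "x \<in> Z2 \<Longrightarrow> y \<in> Z2 \<Longrightarrow> z2_mul x y \<in> Z2"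
  unfolding z2_mul_def by (rule Z2_ofI) (metis Z2_step mod_mult_eq)

lemma z2_neg_Z2: "x \<in> Z2 \<Longrightarrow> z2_neg x \<in> Z2"
  unfolding z2_neg_def by (rule Z2_ofI) (metis Z2_step mod_minus_eq)

lemma z2_of_int_Z2: "z2_of_int k \<in> Z2"
  unfolding z2_of_int_def by (rule Z2_ofI) (simp add: mod_mod_cancel)

lemma o_add_O: "u \<in> O_carrier \<Longrightarrow> v \<in> O_carrier \<Longrightarrow> o_add u v \<in> O_carrier"
  by (auto simp: O_carrier_def o_add_def z2_add_Z2 mem_Times_iff)

lemma o_mul_O: "u \<in> O_carrier \<Longrightarrow> v \<in> O_carrier \<Longrightarrow> o_mul P u v \<in> O_carrier"
  by (auto simp: O_carrier_def o_mul_def Let_def z2_add_Z2 z2_mul_Z2 z2_neg_Z2 z2_of_int_Z2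
      mem_Times_iff)

lemma o_const_O: "(z2_of_int a, z2_of_int b) \<in> O_carrier"
  by (simp add: O_carrier_def z2_of_int_Z2)

lemma o_zero_O: "o_zero \<in> O_carrier"
  by (simp add: o_zero_def o_const_O)

lemma o_one_O: "o_one \<in> O_carrier"
  by (simp add: o_one_def o_const_O)

lemma o_pi_O: "o_pi \<in> O_carrier"
  by (simp add: o_pi_def o_const_O)

lemma o_pow_O: "u \<in> O_carrier \<Longrightarrow> o_pow P u k \<in> O_carrier"
  by (induction k) (simp_all add: o_one_O o_mul_O)

lemma o_sum_O: "(\<And>i. i < s \<Longrightarrow> f i \<in> O_carrier) \<Longrightarrow> o_sum f s \<in> O_carrier"
  by (induction s) (simp_all add: o_zero_O o_add_O)

lemma trunc_compat: "u \<in> O_carrier \<Longrightarrow> cong_pow2 P n (trunc (Suc n) u) (trunc n u)"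
  by (auto simp: cong_pow2_iff O_carrier_def mem_Times_iff Z2_step Z2_mod_self)

lemma O_eqI:
  assumes "u \<in> O_carrier" "v \<in> O_carrier" "\<And>n. cong_pow2 P n (trunc n u) (trunc n v)"
  shows "u = v"
proof -
  have "fst u n = fst v n \<and> snd u n = snd v n" for n
    using assms(1,2) assms(3)[of n]
    by (auto simp: cong_pow2_iff O_carrier_def mem_Times_iff Z2_mod_self)
  then show ?thesis by (simp add: prod_eq_iff fun_eq_iff)
qed

section \<open>Units and Hensel lifting\<close>

definition eisenstein :: "int \<times> int \<Rightarrow> bool" where
  "eisenstein P \<longleftrightarrow> even (fst P) \<and> snd P mod 4 = 2"

lemma eisensteinE:
  assumes "eisenstein P"
  obtains q where "even (fst P)" "snd P = 2 * q" "odd q"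
proof -
  have "snd P = 2 * (snd P div 2)" "odd (snd P div 2)"
    using assms unfolding eisenstein_def by presburger+
  then show ?thesis using that assms by (simp add: eisenstein_def)
qed

text \<open>For Eisenstein parameters, x is a unit modulo pi, and then modulo every power of 2, iff its
first coordinate is odd.\<close>

definition pi_unit :: "int \<times> int \<Rightarrow> zpi \<Rightarrow> bool" where
  "pi_unit P x \<longleftrightarrow> odd (fst (coords P x))"

lemma pi_unit_mult: "eisenstein P \<Longrightarrow> pi_unit P x \<Longrightarrow> pi_unit P y \<Longrightarrow> pi_unit P (x * y)"
  by (elim eisensteinE) (simp add: pi_unit_def quad_mult_def)

lemma pi_unit_power: "eisenstein P \<Longrightarrow> pi_unit P x \<Longrightarrow> pi_unit P (x ^ k)"
  by (induction k) (simp_all add: pi_unit_mult, simp add: pi_unit_def)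

lemma pi_unit_of_int: "odd k \<Longrightarrow> pi_unit P (of_int k)"
  by (simp add: pi_unit_def)

lemma pi_unit_one_plus_2pi: "eisenstein P \<Longrightarrow> pi_unit P (1 + 2 * \<pi> * z)"
  by (elim eisensteinE) (simp add: pi_unit_def \<pi>_def quad_mult_def)

lemma not_pi_unit_pi_power:
  assumes "eisenstein P" "k \<ge> 1" shows "\<not> pi_unit P (\<pi> ^ k * y)"
proof -
  obtain k' where "k = Suc k'" using assms(2) by (cases k) auto
  then show ?thesis using assms(1) by (elim eisensteinE) (simp add: pi_unit_def \<pi>_def quad_mult_def)
qed

lemma pi_unit_cong:
  assumes "n \<ge> 1" "cong_pow2 P n x y" shows "pi_unit P x \<longleftrightarrow> pi_unit P y"
proof -
  have "(2::int) dvd 2 ^ n" using assms(1) by (simp add: dvd_power_iff_le)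
  moreover have "2 ^ n dvd fst (coords P x) - fst (coords P y)"
    using assms(2) by (simp add: cong_mod_def multiples_def)
  ultimately have "2 dvd fst (coords P x) - fst (coords P y)" by (rule dvd_trans)
  then show ?thesis unfolding pi_unit_def by presburger
qed

lemma pi_unit_inverse_mod:
  assumes "eisenstein P" "pi_unit P x"
  obtains y where "cong_pow2 P n (x * y) 1"
proof -
  obtain a b where ab: "coords P x = (a, b)" by (cases "coords P x")
  define N where "N = a * a + fst P * a * b + snd P * b * b"
  obtain h where "even (fst P)" "snd P = 2 * h" using assms(1) by (rule eisensteinE)
  then have "odd N" using assms(2) ab by (simp add: N_def pi_unit_def)
  then have "coprime N (2 ^ n)" by simp
  then obtain u v where "u * N + v * 2 ^ n = 1" using bezout_int[of N "2 ^ n"] by auto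
  then have "N * u - 1 = 2 ^ n * (- v)" by (simp add: algebra_simps)
  then have N': "(2::int) ^ n dvd N * u - 1" by (metis dvd_triv_left)
  \<comment> \<open>the conjugate of a + b pi is a + b tr - b pi, and their product is the odd norm N\<close>
  define y where "y = zpi_of (a + b * fst P, - b) * of_int u"
  have "coords P (x * y) = (N * u, 0)"
    by (simp add: y_def ab quad_mult_def N_def algebra_simps)
  then have "cong_pow2 P n (x * y) 1" using N' by (simp add: cong_mod_def multiples_def)
  then show ?thesis by (rule that)
qed

lemma pi_unit_cancel:
  assumes "eisenstein P" "pi_unit P u" "cong_pow2 P n (w * u) 0"
  shows "cong_pow2 P n w 0"
proof -
  obtain v where v: "cong_pow2 P n (u * v) 1" using pi_unit_inverse_mod[OF assms(1,2)] .
  have "cong_pow2 P n w (w * (u * v))"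
    using multiples.cong_sym[OF multiples.cong_mult_left[OF v, of w]] by simp
  also have "cong_pow2 P n (w * (u * v)) (0 * v)"
    using multiples.cong_mult[OF assms(3) multiples.cong_refl, of v] by (simp add: mult.assoc)
  finally show ?thesis by simp
qed

lemma pi_unit_of_cong_one:
  assumes "eisenstein P" "cong_pow2 P n (x * y) 1" "n \<ge> 1"
  shows "pi_unit P x"
proof -
  have "pi_unit P (x * y)" using pi_unit_cong[OF assms(3,2)] by (simp add: pi_unit_def)
  moreover obtain h where "snd P = 2 * h" using assms(1) by (rule eisensteinE)
  ultimately show ?thesis by (auto simp: pi_unit_def quad_mult_def)
qed

definition residues :: "nat \<Rightarrow> (int \<times> int) set" where
  "residues n = {0..<2 ^ n} \<times> {0..<2 ^ n}"

definition reduce :: "nat \<Rightarrow> int \<times> int \<Rightarrow> int \<times> int" where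
  "reduce n r = (fst r mod 2 ^ n, snd r mod 2 ^ n)"

lemma reduce_in_residues: "reduce n r \<in> residues n"
  by (simp add: reduce_def residues_def)

lemma cong_reduce: "cong_pow2 P n (zpi_of (reduce n (coords P x))) x"
  by (simp add: reduce_def cong_pow2_iff)

lemma residues_cong_eq:
  "r \<in> residues n \<Longrightarrow> r' \<in> residues n \<Longrightarrow> cong_pow2 P n (zpi_of r) (zpi_of r') \<Longrightarrow> r = r'"
  by (auto simp: residues_def cong_pow2_iff prod_eq_iff)

lemma slope_cong:
  assumes slope: "\<And>z z'. n \<ge> 1 \<Longrightarrow> \<exists>U. pi_unit P U \<and> \<phi> z - \<phi> z' = (z - z') * U"
    and "cong_pow2 P n z z'"
  shows "cong_pow2 P n (\<phi> z) (\<phi> z')"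
proof (cases "n = 0")
  case False
  then obtain U where "\<phi> z - \<phi> z' = (z - z') * U" using slope by fastforce
  then show ?thesis using multiples.mult_mem assms(2) by (simp add: cong_mod_def)
qed simp

lemma slope_cong_rev:
  assumes "eisenstein P"
    and slope: "\<And>z z'. n \<ge> 1 \<Longrightarrow> \<exists>U. pi_unit P U \<and> \<phi> z - \<phi> z' = (z - z') * U"
    and "cong_pow2 P n (\<phi> z) (\<phi> z')"
  shows "cong_pow2 P n z z'"
proof (cases "n = 0")
  case False
  then obtain U where U: "pi_unit P U" "\<phi> z - \<phi> z' = (z - z') * U" using slope by fastforce
  then have "cong_pow2 P n ((z - z') * U) 0" using assms(3) by (simp add: cong_mod_def)
  then show ?thesis using pi_unit_cancel[OF assms(1) U(1)] by (simp add: cong_mod_def)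
qed simp

text \<open>A map with unit slope permutes the residues modulo 2^n, hence has exactly one root there.\<close>

lemma unique_root_mod_pow2:
  assumes "eisenstein P"
    and slope: "\<And>z z'. n \<ge> 1 \<Longrightarrow> \<exists>U. pi_unit P U \<and> \<phi> z - \<phi> z' = (z - z') * U"
  shows "\<exists>!r. r \<in> residues n \<and> cong_pow2 P n (\<phi> (zpi_of r)) 0"
proof -
  define F where "F r = reduce n (coords P (\<phi> (zpi_of r)))" for r
  have F_cong: "cong_pow2 P n (zpi_of (F r)) (\<phi> (zpi_of r))" for r
    unfolding F_def by (rule cong_reduce)
  have root_eq: "r = r'"
    if "r \<in> residues n" "r' \<in> residues n" "cong_pow2 P n (\<phi> (zpi_of r)) (\<phi> (zpi_of r'))" for r r'
    using residues_cong_eq[OF that(1,2) slope_cong_rev[OF assms that(3)]] .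
  have "inj_on F (residues n)"
  proof (rule inj_onI)
    fix r r' assume r: "r \<in> residues n" "r' \<in> residues n" "F r = F r'"
    have "cong_pow2 P n (\<phi> (zpi_of r)) (zpi_of (F r'))"
      using multiples.cong_sym[OF F_cong[of r]] r(3) by simp
    then have "cong_pow2 P n (\<phi> (zpi_of r)) (\<phi> (zpi_of r'))"
      using F_cong[of r'] by (rule multiples.cong_trans)
    then show "r = r'" using root_eq r by blast
  qed
  moreover have "F ` residues n \<subseteq> residues n" by (auto simp: F_def reduce_in_residues)
  moreover have "finite (residues n)" by (simp add: residues_def)
  ultimately have "F ` residues n = residues n" using endo_inj_surj by blast
  moreover have "(0, 0) \<in> residues n" by (simp add: residues_def)
  ultimately obtain r where r: "r \<in> residues n" "F r = (0, 0)" by (metis imageE)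
  have root: "cong_pow2 P n (\<phi> (zpi_of r)) 0"
    using multiples.cong_sym[OF F_cong[of r]] r(2) by simp
  show ?thesis
  proof (rule ex1I[of _ r])
    fix r' assume "r' \<in> residues n \<and> cong_pow2 P n (\<phi> (zpi_of r')) 0"
    then show "r' = r"
      using root_eq[OF _ r(1)] multiples.cong_trans[OF _ multiples.cong_sym[OF root]] by blast
  qed (use r(1) root in blast)
qed

text \<open>The roots modulo the successive powers of 2 are compatible, so they are the truncations
of a single element of O.\<close>

lemma exists_O_root:
  fixes \<phi> :: "nat \<Rightarrow> zpi \<Rightarrow> zpi"
  assumes eis: "eisenstein P"
    and compat: "\<And>n z. cong_pow2 P n (\<phi> (Suc n) z) (\<phi> n z)"
    and slope: "\<And>n z z'. n \<ge> 1 \<Longrightarrow> \<exists>U. pi_unit P U \<and> \<phi> n z - \<phi> n z' = (z - z') * U"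
  shows "\<exists>z \<in> O_carrier. \<forall>n. cong_pow2 P n (\<phi> n (trunc n z)) 0"
proof -
  note unique = unique_root_mod_pow2[OF eis slope]
  define rt where "rt n = (THE r. r \<in> residues n \<and> cong_pow2 P n (\<phi> n (zpi_of r)) 0)" for n
  have rt: "rt n \<in> residues n" "cong_pow2 P n (\<phi> n (zpi_of (rt n))) 0" for n
    using theI'[OF unique[of n]] unfolding rt_def by blast+
  have rt_compat: "reduce n (rt (Suc n)) = rt n" for n
  proof -
    have "cong_pow2 P n (\<phi> n (zpi_of (reduce n (rt (Suc n))))) (\<phi> n (zpi_of (rt (Suc n))))"
      using slope_cong[where \<phi> = "\<phi> n", OF slope cong_reduce[of P n "zpi_of (rt (Suc n))"]] by simp
    also have "cong_pow2 P n \<dots> (\<phi> (Suc n) (zpi_of (rt (Suc n))))"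
      by (rule multiples.cong_sym[OF compat])
    also have "cong_pow2 P n \<dots> 0"
      using cong_pow2_mono[OF _ rt(2)[of "Suc n"], of n] by simp
    finally show ?thesis using unique[of n] rt[of n] reduce_in_residues by blast
  qed
  define z where "z = (\<lambda>n. fst (rt n), \<lambda>n. snd (rt n))"
  have "0 \<le> fst (rt n) \<and> fst (rt n) < 2 ^ n \<and> 0 \<le> snd (rt n) \<and> snd (rt n) < 2 ^ n" for n
    using rt(1)[of n] by (auto simp: residues_def mem_Times_iff)
  then have "fst z \<in> Z2" "snd z \<in> Z2"
    using rt_compat by (auto simp: Z2_def z_def reduce_def prod_eq_iff)
  then have "z \<in> O_carrier" by (simp add: O_carrier_def mem_Times_iff)
  moreover have "trunc n z = zpi_of (rt n)" for n by (simp add: trunc_def z_def)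
  ultimately show ?thesis using rt(2) by metis
qed

definition lift_coeff :: "nat \<Rightarrow> nat \<Rightarrow> zpi" where
  "lift_coeff m j = of_nat (2 * m choose j) * 2 ^ (j - 2) * \<pi> ^ (j - 2)"

definition lift_poly :: "nat \<Rightarrow> zpi \<Rightarrow> zpi" where
  "lift_poly m z = of_nat m * z + \<pi> * (\<Sum>j\<in>{2..2*m}. lift_coeff m j * z ^ j)"

definition lift_slope :: "nat \<Rightarrow> zpi \<Rightarrow> zpi \<Rightarrow> zpi" where
  "lift_slope m z z' =
     of_nat m + \<pi> * (\<Sum>j\<in>{2..2*m}. lift_coeff m j * (\<Sum>i<j. z' ^ (j - Suc i) * z ^ i))"

lemma one_plus_2pi_power:
  assumes "m \<ge> 1" shows "(1 + 2 * \<pi> * z) ^ (2 * m) = 1 + 4 * \<pi> * lift_poly m z"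
proof -
  let ?d = "2 * m"
  have split: "{..?d} = {0, 1} \<union> {2..?d}" using assms by auto
  have tail: "of_nat (?d choose k) * (2 * \<pi> * z) ^ k = 4 * \<pi> * (\<pi> * (lift_coeff m k * z ^ k))"
    if "k \<in> {2..?d}" for k
  proof -
    have k: "k = Suc (Suc (k - 2))" using that by auto
    show ?thesis unfolding lift_coeff_def by (subst (1 2) k) (simp add: power_mult_distrib algebra_simps)
  qed
  have "(1 + 2 * \<pi> * z) ^ ?d = (\<Sum>k\<le>?d. of_nat (?d choose k) * (2 * \<pi> * z) ^ k)"
    using binomial_ring[of "2 * \<pi> * z" 1 ?d] by (simp add: add.commute)
  also have "\<dots> = 1 + of_nat ?d * (2 * \<pi> * z)
                   + (\<Sum>k\<in>{2..?d}. of_nat (?d choose k) * (2 * \<pi> * z) ^ k)"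
    unfolding split by (subst sum.union_disjoint) auto
  also have "(\<Sum>k\<in>{2..?d}. of_nat (?d choose k) * (2 * \<pi> * z) ^ k)
      = 4 * \<pi> * (\<pi> * (\<Sum>j\<in>{2..?d}. lift_coeff m j * z ^ j))"
    by (simp add: tail sum_distrib_left)
  finally show ?thesis by (simp add: lift_poly_def algebra_simps)
qed

lemma lift_poly_diff: "lift_poly m z - lift_poly m z' = (z - z') * lift_slope m z z'"
proof -
  have "(\<Sum>j\<in>{2..2*m}. lift_coeff m j * z ^ j) - (\<Sum>j\<in>{2..2*m}. lift_coeff m j * z' ^ j)
      = (\<Sum>j\<in>{2..2*m}. lift_coeff m j * (z ^ j - z' ^ j))"
    by (simp add: sum_subtractf algebra_simps)
  also have "\<dots> = (\<Sum>j\<in>{2..2*m}. (z - z') * (lift_coeff m j * (\<Sum>i<j. z' ^ (j - Suc i) * z ^ i)))"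
    by (rule sum.cong) (simp_all add: power_diff_sumr2 algebra_simps)
  finally have "(\<Sum>j\<in>{2..2*m}. lift_coeff m j * z ^ j) - (\<Sum>j\<in>{2..2*m}. lift_coeff m j * z' ^ j)
      = (\<Sum>j\<in>{2..2*m}. (z - z') * (lift_coeff m j * (\<Sum>i<j. z' ^ (j - Suc i) * z ^ i)))" .
  then show ?thesis
    by (simp add: lift_poly_def lift_slope_def sum_distrib_left algebra_simps)
qed

lemma pi_unit_lift_slope: "eisenstein P \<Longrightarrow> odd m \<Longrightarrow> pi_unit P (lift_slope m z z')"
  by (elim eisensteinE) (simp add: lift_slope_def pi_unit_def \<pi>_def quad_mult_def)

lemma compatible_seq_le:
  fixes A :: "nat \<Rightarrow> int"
  assumes "\<And>n. 2 ^ n dvd A (Suc n) - A n" and "n \<le> k"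
  shows "2 ^ n dvd A k - A n"
  using assms(2)
proof (induction k)
  case (Suc k)
  show ?case
  proof (cases "n = Suc k")
    case False
    then have "n \<le> k" using Suc.prems by simp
    then have "2 ^ n dvd (A (Suc k) - A k) + (A k - A n)"
      using Suc.IH dvd_trans[OF le_imp_power_dvd assms(1)] by (intro dvd_add) auto
    then show ?thesis by simp
  qed simp
qed simp

lemma compatible_seq_div:
  fixes A :: "nat \<Rightarrow> int"
  assumes compat: "\<And>n. 2 ^ n dvd A (Suc n) - A n" and base: "2 ^ s dvd A s"
  shows "2 ^ n dvd 2 ^ s * (A (n + s) div 2 ^ s) - A n"
    and "2 ^ n dvd A (Suc n + s) div 2 ^ s - A (n + s) div 2 ^ s"
proof -
  have dvd_s: "2 ^ s dvd A (n + s)" for n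
    using dvd_add[OF compatible_seq_le[OF compat, of s "n + s"] base] by simp
  then show "2 ^ n dvd 2 ^ s * (A (n + s) div 2 ^ s) - A n"
    using compatible_seq_le[OF compat, of n "n + s"] by simp
  have "2 ^ (n + s) dvd A (Suc n + s) - A (n + s)" using compat[of "n + s"] by simp
  also have "A (Suc n + s) - A (n + s) = 2 ^ s * (A (Suc n + s) div 2 ^ s - A (n + s) div 2 ^ s)"
    using dvd_s[of n] dvd_s[of "Suc n"] by (simp add: right_diff_distrib)
  finally show "2 ^ n dvd A (Suc n + s) div 2 ^ s - A (n + s) div 2 ^ s"
    by (simp add: power_add mult.commute)
qed

text \<open>For Eisenstein parameters this is the ideal pi^5 O = 4 pi O.\<close>

definition pi5_ideal :: "int \<times> int \<Rightarrow> zpi set" where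
  "pi5_ideal P = {x. 8 dvd fst (coords P x) \<and> 4 dvd snd (coords P x)}"

lemma ring_ideal_pi5: assumes "even (snd P)" shows "ring_ideal (pi5_ideal P)"
proof
  fix x y :: zpi
  assume "x \<in> pi5_ideal P"
  then obtain a b where "fst (coords P x) = 8 * a" "snd (coords P x) = 4 * b"
    by (auto simp: pi5_ideal_def elim!: dvdE)
  moreover obtain q where "snd P = 2 * q" using assms by blast
  ultimately show "x * y \<in> pi5_ideal P"
    by (simp add: pi5_ideal_def quad_mult_def algebra_simps)
qed (auto simp: pi5_ideal_def)

lemma cong_pi5_of_cong_pow2: "cong_pow2 P 3 x y \<Longrightarrow> cong_mod (pi5_ideal P) x y"
  unfolding cong_mod_def multiples_def pi5_ideal_def by (auto elim: dvd_trans[rotated])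

text \<open>Division by 4 pi is only possible up to the odd factor q = nm / 2, because
4 pi (x + y pi) = - 8 q y + 4 (x + tr y) pi.\<close>

lemma compatible_seq_div_4pi:
  assumes q: "snd P = 2 * q"
    and compat: "\<And>n. cong_pow2 P n (T (Suc n)) (T n)" and T3: "T 3 \<in> pi5_ideal P"
  obtains X where "\<And>n. cong_pow2 P n (X (Suc n)) (X n)"
    and "\<And>n. cong_pow2 P n (of_int q * T n) (4 * \<pi> * X n)"
proof -
  define A where "A n = fst (coords P (T n))" for n
  define B where "B n = snd (coords P (T n))" for n
  have A_compat: "2 ^ n dvd A (Suc n) - A n" and B_compat: "2 ^ n dvd B (Suc n) - B n" for n
    using compat[of n] by (simp_all add: A_def B_def cong_mod_def multiples_def)
  have A3: "2 ^ 3 dvd A 3" using T3 by (simp add: A_def pi5_ideal_def)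
  have "4 dvd B 3" "4 dvd B 3 - B 2" using T3 B_compat[of 2] by (simp_all add: B_def pi5_ideal_def)
  then have B2: "2 ^ 2 dvd B 2" by (simp add: dvd_diff_right_iff)
  define a where "a n = A (n + 3) div 2 ^ 3" for n
  define b where "b n = B (n + 2) div 2 ^ 2" for n
  note a_props = compatible_seq_div[OF A_compat A3, folded a_def]
  note b_props = compatible_seq_div[OF B_compat B2, folded b_def]
  define X where "X n = zpi_of (q * b n + fst P * a n, - a n)" for n
  show ?thesis
  proof
    fix n
    have "2 ^ n dvd q * (b (Suc n) - b n) + fst P * (a (Suc n) - a n)"
      using a_props(2)[of n] b_props(2)[of n] by simp
    moreover have "2 ^ n dvd a n - a (Suc n)"
      using dvd_minus_iff[THEN iffD2, OF a_props(2)[of n]] by simp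
    ultimately show "cong_pow2 P n (X (Suc n)) (X n)"
      by (simp add: X_def cong_mod_def multiples_def algebra_simps)
    have "2 ^ n dvd q * (2 ^ 3 * a n - A n)" "2 ^ n dvd q * (2 ^ 2 * b n - B n)"
      using a_props(1)[of n] b_props(1)[of n] by simp_all
    moreover have "coords P (of_int q * T n - 4 * \<pi> * X n)
        = (- (q * (2 ^ 3 * a n - A n)), - (q * (2 ^ 2 * b n - B n)))"
      by (simp add: X_def \<pi>_def quad_mult_def q A_def B_def algebra_simps)
    ultimately show "cong_pow2 P n (of_int q * T n) (4 * \<pi> * X n)"
      unfolding cong_mod_def multiples_def by simp
  qed
qed

lemma sum_update_power:
  fixes c y :: "'i \<Rightarrow> 'a::comm_ring_1"
  assumes "finite A" "i \<in> A"
  shows "(\<Sum>k\<in>A. c k * (if k = i then w else y k) ^ d)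
       = (\<Sum>k\<in>A. c k * y k ^ d) + c i * (w ^ d - y i ^ d)"
proof -
  have "(\<Sum>k\<in>A - {i}. c k * (if k = i then w else y k) ^ d) = (\<Sum>k\<in>A - {i}. c k * y k ^ d)"
    by (rule sum.cong) auto
  then show ?thesis by (simp add: sum.remove[OF assms] algebra_simps)
qed

lemma sum_lift_identity:
  fixes c y :: "nat \<Rightarrow> zpi"
  assumes "i < N" "m \<ge> 1"
  shows "(\<Sum>k<N. c k * (if k = i then y i * (1 + 2 * \<pi> * z) else y k) ^ (2 * m))
       = (\<Sum>k<N. c k * y k ^ (2 * m)) + 4 * \<pi> * (c i * y i ^ (2 * m) * lift_poly m z)"
proof -
  have "(y i * (1 + 2 * \<pi> * z)) ^ (2 * m) - y i ^ (2 * m) = y i ^ (2 * m) * (4 * \<pi> * lift_poly m z)"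
    by (simp only: power_mult_distrib one_plus_2pi_power[OF assms(2)]) (simp add: algebra_simps)
  then show ?thesis
    using sum_update_power[of "{..<N}" i c "y i * (1 + 2 * \<pi> * z)" y "2 * m"] assms(1)
    by (simp add: algebra_simps)
qed

lemma unit_slope_lift_poly:
  assumes "eisenstein P" "odd m" "pi_unit P K"
  shows "\<exists>U. pi_unit P U \<and> (X + K * lift_poly m z) - (X + K * lift_poly m z') = (z - z') * U"
proof (intro exI conjI)
  show "pi_unit P (K * lift_slope m z z')"
    using assms by (intro pi_unit_mult pi_unit_lift_slope)
  have "(X + K * lift_poly m z) - (X + K * lift_poly m z') = K * (lift_poly m z - lift_poly m z')"
    by (simp add: algebra_simps)
  then show "(X + K * lift_poly m z) - (X + K * lift_poly m z') = (z - z') * (K * lift_slope m z z')"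
    by (simp add: lift_poly_diff ac_simps)
qed

lemma hensel_lift:
  fixes c :: "nat \<Rightarrow> nat \<Rightarrow> zpi" and y :: "nat \<Rightarrow> zpi"
  assumes eis: "eisenstein P" and m: "odd m"
    and c_compat: "\<And>n k. k < N \<Longrightarrow> cong_pow2 P n (c (Suc n) k) (c n k)"
    and i: "i < N" and c_unit: "\<And>n. n \<ge> 1 \<Longrightarrow> pi_unit P (c n i)" and y_unit: "pi_unit P (y i)"
    and sol: "(\<Sum>k<N. c 3 k * y k ^ (2 * m)) \<in> pi5_ideal P"
  shows "\<exists>z\<in>O_carrier. \<forall>n. cong_pow2 P n
           (\<Sum>k<N. c n k * (if k = i then y i * (1 + 2 * \<pi> * trunc n z) else y k) ^ (2 * m)) 0"
proof -
  obtain q where q: "snd P = 2 * q" "odd q" using eis by (rule eisensteinE)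
  define T where "T n = (\<Sum>k<N. c n k * y k ^ (2 * m))" for n
  have "cong_pow2 P n (T (Suc n)) (T n)" for n
    unfolding T_def by (intro multiples.cong_sum multiples.cong_mult c_compat multiples.cong_refl) simp
  then obtain X where X_compat: "\<And>n. cong_pow2 P n (X (Suc n)) (X n)"
    and X: "\<And>n. cong_pow2 P n (of_int q * T n) (4 * \<pi> * X n)"
    using compatible_seq_div_4pi[OF q(1)] sol by (metis T_def)
  define K where "K n = of_int q * c n i * y i ^ (2 * m)" for n
  \<comment> \<open>modulo 2^n, q times the lifted form is 4 pi (X n + K n lift_poly m z), so it suffices to solve
    \<Phi> n z = 0 at every precision\<close>
  define \<Phi> where "\<Phi> n z = X n + K n * lift_poly m z" for n z
  have "\<exists>U. pi_unit P U \<and> \<Phi> n z - \<Phi> n z' = (z - z') * U" if "n \<ge> 1" for n z z'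
    unfolding \<Phi>_def K_def using that
    by (intro unit_slope_lift_poly pi_unit_mult pi_unit_of_int pi_unit_power c_unit y_unit q(2) m eis)
  moreover have "cong_pow2 P n (\<Phi> (Suc n) z) (\<Phi> n z)" for n z
    unfolding \<Phi>_def K_def
    using i by (intro multiples.cong_add X_compat multiples.cong_mult c_compat multiples.cong_refl)
  ultimately obtain z where "z \<in> O_carrier" and z: "\<And>n. cong_pow2 P n (\<Phi> n (trunc n z)) 0"
    using exists_O_root[OF eis] by metis
  have "cong_pow2 P n
      (\<Sum>k<N. c n k * (if k = i then y i * (1 + 2 * \<pi> * trunc n z) else y k) ^ (2 * m)) 0" for n
  proof -
    let ?F = "\<Sum>k<N. c n k * (if k = i then y i * (1 + 2 * \<pi> * trunc n z) else y k) ^ (2 * m)"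
    have "m \<ge> 1" using m by presburger
    then have "of_int q * ?F = of_int q * T n + 4 * \<pi> * (K n * lift_poly m (trunc n z))"
      using sum_lift_identity[OF i, of m "c n" y "trunc n z"] by (simp add: T_def K_def algebra_simps)
    also have "cong_pow2 P n \<dots> (4 * \<pi> * X n + 4 * \<pi> * (K n * lift_poly m (trunc n z)))"
      by (rule multiples.cong_add[OF X multiples.cong_refl])
    also have "\<dots> = 4 * \<pi> * \<Phi> n (trunc n z)"
      by (simp add: \<Phi>_def algebra_simps)
    also have "cong_pow2 P n \<dots> 0"
      using multiples.cong_mult_left[OF z, where c = "4 * \<pi>"] by simp
    finally show ?thesis
      using pi_unit_cancel[OF eis pi_unit_of_int[OF q(2)]] by (simp add: mult.commute)
  qed
  then show ?thesis using \<open>z \<in> O_carrier\<close> by blast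
qed

section \<open>Zeros modulo pi^5\<close>

definition res_pi5 :: "int \<times> int \<Rightarrow> int \<times> int" where
  "res_pi5 r = (fst r mod 8, snd r mod 4)"

definition sq_one_plus_pi :: "int \<times> int \<Rightarrow> int \<times> int" where
  "sq_one_plus_pi P = quad_mult P (1, 1) (1, 1)"

text \<open>The lexicographically smaller of r and the residue of r (1 + pi)^2; by pi5_solvable_twist
only coefficient tuples made of such representatives need to be searched.\<close>

definition canon :: "int \<times> int \<Rightarrow> int \<times> int \<Rightarrow> int \<times> int" where
  "canon P r = (let r' = res_pi5 (quad_mult P r (sq_one_plus_pi P)) in
                if 4 * fst r + snd r \<le> 4 * fst r' + snd r' then r else r')"

definition unit_residues :: "(int \<times> int) list" where
  "unit_residues = [(a, b). a <- [1, 3, 5, 7], b <- [0, 1, 2, 3]]"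

definition unit_residues_parity :: "int \<Rightarrow> (int \<times> int) list" where
  "unit_residues_parity p = filter (\<lambda>r. snd r mod 2 = p) unit_residues"

definition even_nonzero_residues :: "(int \<times> int) list" where
  "even_nonzero_residues = [(0, 2), (2, 0), (2, 2), (4, 0), (4, 2), (6, 0), (6, 2)]"

text \<open>The coordinates of r times pow_class e, the residue of y^d for y = 0, 1, 1 + pi.\<close>

definition class_value :: "int \<times> int \<Rightarrow> nat \<Rightarrow> int \<times> int \<Rightarrow> int \<times> int" where
  "class_value P e r =
     (if e = 0 then (0, 0) else if e = 1 then r else quad_mult P r (sq_one_plus_pi P))"

definition pattern_solves :: "int \<times> int \<Rightarrow> (int \<times> int) list \<Rightarrow> nat list \<Rightarrow> bool" where
  "pattern_solves P rs es \<longleftrightarrow>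
     (let v = map2 (class_value P) es rs in
      sum_list (map fst v) mod 8 = 0 \<and> sum_list (map snd v) mod 4 = 0)"

text \<open>Exponent-class patterns found by computer search: for every coefficient tuple checked below,
one of them gives a zero modulo pi^5.\<close>

definition patterns :: "nat list list" where
  "patterns = [[0,0,1,2,0], [1,2,0,0,0], [2,1,1,2,0], [1,2,0,0,1], [1,1,0,0,2], [2,1,1,2,2],
     [0,0,1,2,2], [1,1,2,1,2], [0,0,1,1,2], [1,2,1,1,2], [2,2,2,2,2], [1,1,2,2,0], [1,2,1,1,0],
     [2,2,1,2,0], [0,0,1,2,1], [2,1,1,2,1]]"

text \<open>The coefficients are normalised to c0 = 1, c1 = 1 and c3 = c2 modulo 2, c2 a unit, and c4 a
nonzero multiple of 2 modulo pi^5.\<close>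

definition pi5_certificate :: "int \<times> int \<Rightarrow> bool" where
  "pi5_certificate P \<longleftrightarrow>
     (let C = \<lambda>L. remdups (map (canon P) L) in
      list_all (\<lambda>r1. list_all (\<lambda>r2. list_all (\<lambda>r3. list_all (\<lambda>r4.
          list_ex (pattern_solves P [(1, 0), r1, r2, r3, r4]) patterns)
        (C even_nonzero_residues)) (C (unit_residues_parity (snd r2 mod 2))))
        (C unit_residues)) (C (unit_residues_parity 0)))"

fun pi_coords :: "int \<times> int \<Rightarrow> nat \<Rightarrow> int \<times> int" where
  "pi_coords P 0 = (1, 0)"
| "pi_coords P (Suc j) = quad_mult P (0, 1) (pi_coords P j)"

definition pi_power_table :: "int \<times> int \<Rightarrow> bool" where
  "pi_power_table P \<longleftrightarrow>
     list_all (\<lambda>v. list_all (\<lambda>j. res_pi5 (quad_mult P (pi_coords P j) v) \<in> set even_nonzero_residues)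
       [2, 3, 4]) unit_residues"

lemma coords_pi_power: "coords P (\<pi> ^ j) = pi_coords P j"
  by (induction j) (simp_all add: \<pi>_def)

lemma coords_sq_one_plus_pi: "coords P ((1 + \<pi>) ^ 2) = sq_one_plus_pi P"
  by (simp add: sq_one_plus_pi_def power2_eq_square \<pi>_def quad_mult_def)

lemma cong_pi5_iff: "cong_mod (pi5_ideal P) x y \<longleftrightarrow> res_pi5 (coords P x) = res_pi5 (coords P y)"
  by (simp add: cong_mod_def pi5_ideal_def res_pi5_def mod_eq_dvd_iff)

lemma cong_pi5_res: "cong_mod (pi5_ideal P) (zpi_of (res_pi5 (coords P x))) x"
  by (simp add: cong_pi5_iff res_pi5_def)

lemma sq_one_plus_pi_square:
  assumes "eisenstein P"
  shows "cong_mod (pi5_ideal P) ((1 + \<pi>) ^ 2 * (1 + \<pi>) ^ 2) 1"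
proof -
  obtain q t where "fst P = 2 * t" "snd P = 2 * q" "odd q"
    using assms by (metis eisensteinE evenE)
  moreover obtain q' where "q = 2 * q' + 1" using \<open>odd q\<close> by (metis oddE)
  ultimately show ?thesis
    by (simp add: cong_mod_def pi5_ideal_def quad_mult_def power2_eq_square \<pi>_def algebra_simps)
qed

definition pow_class :: "nat \<Rightarrow> zpi" where
  "pow_class e = (if e = 0 then 0 else if e = 1 then 1 else (1 + \<pi>) ^ 2)"

definition pi5_solvable :: "int \<times> int \<Rightarrow> (nat \<Rightarrow> zpi) \<Rightarrow> bool" where
  "pi5_solvable P x \<longleftrightarrow>
     (\<exists>e. (\<forall>k<5. e k \<le> 2) \<and> (\<exists>k<4. e k \<noteq> 0) \<and> (\<Sum>k<5. x k * pow_class (e k)) \<in> pi5_ideal P)"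

lemma sum_lessThan_5:
  fixes f :: "nat \<Rightarrow> 'a::comm_monoid_add"
  shows "(\<Sum>k<5. f k) = f 0 + f 1 + f 2 + f 3 + f 4"
  by (simp add: eval_nat_numeral ac_simps)

lemma less_5_cases: "(k::nat) < 5 \<Longrightarrow> k = 0 \<or> k = 1 \<or> k = 2 \<or> k = 3 \<or> k = 4"
  by auto

lemma patterns_valid:
  "list_all (\<lambda>es. length es = 5 \<and> list_all (\<lambda>e. e \<le> 2) es \<and> list_ex (\<lambda>e. e \<noteq> 0) (take 4 es)) patterns"
  by code_simp

lemma coords_pow_class: "e \<le> 2 \<Longrightarrow> quad_mult P r (coords P (pow_class e)) = class_value P e r"
  by (auto simp: pow_class_def class_value_def coords_sq_one_plus_pi quad_mult_def)

lemma pattern_solves_sound: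
  assumes "es \<in> set patterns" and "pattern_solves P rs es" and "length rs = 5"
  shows "pi5_solvable P (\<lambda>k. zpi_of (rs ! k))"
proof -
  have es: "length es = 5" "\<forall>e\<in>set es. e \<le> 2" "\<exists>e\<in>set (take 4 es). e \<noteq> 0"
    using patterns_valid assms(1) by (auto simp: list_all_iff list_ex_iff)
  obtain e0 e1 e2 e3 e4 where es_eq: "es = [e0, e1, e2, e3, e4]"
    using es(1) by (auto simp: numeral_eq_Suc length_Suc_conv)
  obtain r0 r1 r2 r3 r4 where rs_eq: "rs = [r0, r1, r2, r3, r4]"
    using assms(3) by (auto simp: numeral_eq_Suc length_Suc_conv)
  show ?thesis unfolding pi5_solvable_def
  proof (intro exI[of _ "(!) es"] conjI)
    show "\<forall>k<5. es ! k \<le> 2" using es(1,2) by (auto simp: all_set_conv_all_nth)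
    show "\<exists>k<4. es ! k \<noteq> 0" using es(1,3) by (fastforce simp: in_set_conv_nth)
    show "(\<Sum>k<5. zpi_of (rs ! k) * pow_class (es ! k)) \<in> pi5_ideal P"
      using assms(2) es(2)
      by (simp add: sum_lessThan_5 rs_eq es_eq pi5_ideal_def pattern_solves_def coords_pow_class
          mod_eq_0_iff_dvd add.assoc)
  qed
qed

lemma ring_ideal_pi5_eisenstein: "eisenstein P \<Longrightarrow> ring_ideal (pi5_ideal P)"
  by (rule ring_ideal_pi5) (auto elim: eisensteinE)

lemma pi5_solvable_cong:
  assumes "eisenstein P" "\<And>k. k < 5 \<Longrightarrow> cong_mod (pi5_ideal P) (x k) (y k)" "pi5_solvable P y"
  shows "pi5_solvable P x"
proof -
  interpret pi5: ring_ideal "pi5_ideal P" using assms(1) by (rule ring_ideal_pi5_eisenstein)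
  obtain e where e: "\<forall>k<5. e k \<le> 2" "\<exists>k<4. e k \<noteq> 0"
    "(\<Sum>k<5. y k * pow_class (e k)) \<in> pi5_ideal P"
    using assms(3) unfolding pi5_solvable_def by blast
  have "cong_mod (pi5_ideal P) (\<Sum>k<5. x k * pow_class (e k)) (\<Sum>k<5. y k * pow_class (e k))"
    using assms(2) by (intro pi5.cong_sum pi5.cong_mult pi5.cong_refl) auto
  then have "(\<Sum>k<5. x k * pow_class (e k)) \<in> pi5_ideal P"
    using e(3) pi5.cong_trans cong_mod_0_iff by metis
  then show ?thesis unfolding pi5_solvable_def using e(1,2) by blast
qed

text \<open>Multiplying a coefficient by (1 + pi)^2, whose square is 1 modulo pi^5, only exchanges the
two nonzero classes pow_class 1 and pow_class 2.\<close>

lemma pi5_solvable_twist: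
  assumes eis: "eisenstein P" and sol: "pi5_solvable P (\<lambda>k. x k * (if f k then (1 + \<pi>) ^ 2 else 1))"
  shows "pi5_solvable P x"
proof -
  interpret pi5: ring_ideal "pi5_ideal P" using eis by (rule ring_ideal_pi5_eisenstein)
  obtain e where e: "\<forall>k<5. e k \<le> 2" "\<exists>k<4. e k \<noteq> 0"
    "(\<Sum>k<5. x k * (if f k then (1 + \<pi>) ^ 2 else 1) * pow_class (e k)) \<in> pi5_ideal P"
    using sol unfolding pi5_solvable_def by blast
  define e' where "e' k = (if f k \<and> e k \<noteq> 0 then 3 - e k else e k)" for k
  have "cong_mod (pi5_ideal P) (x k * pow_class (e' k))
          (x k * (if f k then (1 + \<pi>) ^ 2 else 1) * pow_class (e k))" if "k < 5" for k
  proof -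
    have "e k = 0 \<or> e k = 1 \<or> e k = 2" using e(1) that by auto
    moreover have "cong_mod (pi5_ideal P) (x k) (x k * ((1 + \<pi>) ^ 2 * (1 + \<pi>) ^ 2))"
      using pi5.cong_mult_left[OF pi5.cong_sym[OF sq_one_plus_pi_square[OF eis]]] by simp
    ultimately show ?thesis by (auto simp: e'_def pow_class_def mult.assoc)
  qed
  then have "cong_mod (pi5_ideal P) (\<Sum>k<5. x k * pow_class (e' k))
      (\<Sum>k<5. x k * (if f k then (1 + \<pi>) ^ 2 else 1) * pow_class (e k))"
    by (intro pi5.cong_sum) simp
  then have "(\<Sum>k<5. x k * pow_class (e' k)) \<in> pi5_ideal P"
    using e(3) pi5.cong_trans cong_mod_0_iff by metis
  moreover have "\<forall>k<5. e' k \<le> 2" using e(1) by (auto simp: e'_def)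
  moreover obtain k where "k < 4" "e k \<noteq> 0" using e(2) by blast
  moreover have "e' k \<noteq> 0"
    using \<open>k < 4\<close> \<open>e k \<noteq> 0\<close> e(1)[rule_format, of k] by (auto simp: e'_def)
  ultimately show ?thesis unfolding pi5_solvable_def by blast
qed

lemma pi5_solvable_scale:
  assumes eis: "eisenstein P" and w: "cong_mod (pi5_ideal P) (w' * w) 1"
    and sol: "pi5_solvable P (\<lambda>k. w * x k)"
  shows "pi5_solvable P x"
proof -
  interpret pi5: ring_ideal "pi5_ideal P" using eis by (rule ring_ideal_pi5_eisenstein)
  obtain e where e: "\<forall>k<5. e k \<le> 2" "\<exists>k<4. e k \<noteq> 0"
    "(\<Sum>k<5. w * x k * pow_class (e k)) \<in> pi5_ideal P"
    using sol unfolding pi5_solvable_def by blast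
  let ?S = "\<Sum>k<5. x k * pow_class (e k)"
  have "w * ?S \<in> pi5_ideal P" using e(3) by (simp add: sum_distrib_left mult.assoc)
  then have "w' * (w * ?S) \<in> pi5_ideal P" by (rule pi5.mult_mem_right)
  moreover have "cong_mod (pi5_ideal P) (w' * (w * ?S)) ?S"
    using pi5.cong_mult[OF w pi5.cong_refl, of ?S] by (simp add: mult.assoc)
  ultimately have "?S \<in> pi5_ideal P" using pi5.cong_trans pi5.cong_sym cong_mod_0_iff by metis
  then show ?thesis unfolding pi5_solvable_def using e(1,2) by blast
qed

lemma canon_cong:
  obtains f where "cong_mod (pi5_ideal P) (zpi_of (canon P r)) (zpi_of r * (if f then (1 + \<pi>) ^ 2 else 1))"
proof (cases "canon P r = r")
  case True
  then show ?thesis using that[of False] by (simp add: cong_mod_def pi5_ideal_def)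
next
  case False
  then have "canon P r = res_pi5 (quad_mult P r (sq_one_plus_pi P))"
    by (auto simp: canon_def Let_def split: if_splits)
  then show ?thesis
    using that[of True] by (simp add: cong_pi5_iff coords_sq_one_plus_pi res_pi5_def)
qed

lemma canon_parity:
  assumes "eisenstein P" shows "snd (canon P r) mod 2 = snd r mod 2"
proof -
  obtain q t where tq: "fst P = 2 * t" "snd P = 2 * q" using assms by (metis eisensteinE evenE)
  have "snd (quad_mult P r (sq_one_plus_pi P))
      = snd r + 2 * (fst r * (1 + t) - q * snd r + 2 * t * snd r * (1 + t))"
    by (simp add: quad_mult_def sq_one_plus_pi_def tq algebra_simps)
  then obtain X where X: "snd (quad_mult P r (sq_one_plus_pi P)) = snd r + 2 * X" by blast
  have "snd (res_pi5 (quad_mult P r (sq_one_plus_pi P))) mod 2 = snd r mod 2"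
    by (simp add: res_pi5_def mod_mod_cancel X)
  then show ?thesis by (simp add: canon_def Let_def)
qed

lemma pi5_solvable_of_residues:
  assumes eis: "eisenstein P" and cert: "pi5_certificate P"
    and x0: "cong_mod (pi5_ideal P) (x 0) 1"
    and x1: "res_pi5 (coords P (x 1)) \<in> set (unit_residues_parity 0)"
    and x2: "res_pi5 (coords P (x 2)) \<in> set unit_residues"
    and x3: "res_pi5 (coords P (x 3)) \<in> set (unit_residues_parity (snd (coords P (x 2)) mod 2))"
    and x4: "res_pi5 (coords P (x 4)) \<in> set even_nonzero_residues"
  shows "pi5_solvable P x"
proof -
  interpret pi5: ring_ideal "pi5_ideal P" using eis by (rule ring_ideal_pi5_eisenstein)
  define \<rho> where "\<rho> k = res_pi5 (coords P (x k))" for k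
  define c where "c k = canon P (\<rho> k)" for k
  have "\<exists>f. cong_mod (pi5_ideal P) (zpi_of (c k))
                (zpi_of (\<rho> k) * (if f then (1 + \<pi>) ^ 2 else 1))" for k
    unfolding c_def by (metis canon_cong)
  then obtain f where f: "\<And>k. cong_mod (pi5_ideal P) (zpi_of (c k))
                                 (zpi_of (\<rho> k) * (if f k then (1 + \<pi>) ^ 2 else 1))"
    by metis
  have canon_mem: "canon P r \<in> set (remdups (map (canon P) L))" if "r \<in> set L" for r L
    using that by simp
  have "snd (c 2) mod 2 = snd (coords P (x 2)) mod 2"
    using canon_parity[OF eis] by (simp add: c_def \<rho>_def res_pi5_def mod_mod_cancel)
  then have "list_ex (pattern_solves P [(1, 0), c 1, c 2, c 3, c 4]) patterns"
    using cert canon_mem[OF x1] canon_mem[OF x2] canon_mem[OF x3] canon_mem[OF x4]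
    unfolding pi5_certificate_def Let_def list_all_iff c_def \<rho>_def by metis
  then obtain es where "es \<in> set patterns" "pattern_solves P [(1, 0), c 1, c 2, c 3, c 4] es"
    by (auto simp: list_ex_iff)
  then have "pi5_solvable P (\<lambda>k. zpi_of ([(1, 0), c 1, c 2, c 3, c 4] ! k))"
    by (rule pattern_solves_sound) simp
  moreover have "cong_mod (pi5_ideal P) (x k * (if k \<noteq> 0 \<and> f k then (1 + \<pi>) ^ 2 else 1))
                   (zpi_of ([(1, 0), c 1, c 2, c 3, c 4] ! k))" if "k < 5" for k
  proof (cases "k = 0")
    case False
    have "cong_mod (pi5_ideal P) (x k * (if f k then (1 + \<pi>) ^ 2 else 1))
                   (zpi_of (\<rho> k) * (if f k then (1 + \<pi>) ^ 2 else 1))"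
      unfolding \<rho>_def by (intro pi5.cong_mult pi5.cong_sym[OF cong_pi5_res] pi5.cong_refl)
    also have "cong_mod (pi5_ideal P) \<dots> (zpi_of (c k))" by (rule pi5.cong_sym[OF f])
    finally show ?thesis using False that by (auto simp: numeral_eq_Suc less_Suc_eq)
  qed (simp add: x0)
  ultimately have "pi5_solvable P (\<lambda>k. x k * (if k \<noteq> 0 \<and> f k then (1 + \<pi>) ^ 2 else 1))"
    by (rule pi5_solvable_cong[OF eis, rotated])
  then show ?thesis by (rule pi5_solvable_twist[OF eis])
qed

section \<open>Valuations and the unit form\<close>

lemma of_nat_eq_zpi_of: "of_nat c = zpi_of (int c, 0)"
  by (rule zpi_eqI) simp

lemma pi_square_mult_mem: "eisenstein P \<Longrightarrow> \<pi> ^ 2 * y \<in> multiples P 2"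
  by (elim eisensteinE) (auto simp: multiples_def \<pi>_def quad_mult_def power2_eq_square)

lemma pi_coeff_cong:
  assumes eis: "eisenstein P" and pc: "pi_coeff P u c" and n: "n \<ge> 1"
  shows "cong_pow2 P 1 (trunc n u) (1 + of_nat c * \<pi>)"
proof -
  let ?c = "(z2_of_int (int c), z2_of_int 0)"
  obtain W where eq: "o_sub u (o_add o_one (o_mul P ?c o_pi)) = o_mul P (o_pow P o_pi 2) W"
    using pc unfolding pi_coeff_def o_dvd_def by blast
  have "cong_pow2 P n (trunc n (o_mul P ?c o_pi)) (zpi_of (int c, 0) * \<pi>)"
    by (rule multiples.cong_trans[OF trunc_mul multiples.cong_mult[OF trunc_const trunc_pi]])
  then have "cong_pow2 P n (trunc n (o_add o_one (o_mul P ?c o_pi))) (1 + zpi_of (int c, 0) * \<pi>)"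
    by (rule multiples.cong_trans[OF trunc_add multiples.cong_add[OF trunc_one]])
  then have "cong_pow2 P n (trunc n u - (1 + zpi_of (int c, 0) * \<pi>))
                           (trunc n (o_sub u (o_add o_one (o_mul P ?c o_pi))))"
    by (rule multiples.cong_sym[OF multiples.cong_trans[OF trunc_sub
          multiples.cong_diff[OF multiples.cong_refl]]])
  also have "cong_pow2 P n \<dots> (\<pi> ^ 2 * trunc n W)"
    unfolding eq by (rule trunc_pi_power_mul)
  finally have "cong_pow2 P 1 (trunc n u - (1 + zpi_of (int c, 0) * \<pi>)) (\<pi> ^ 2 * trunc n W)"
    by (rule cong_pow2_mono[OF n])
  also have "cong_pow2 P 1 (\<pi> ^ 2 * trunc n W) 0"
    using pi_square_mult_mem[OF eis] by (simp add: cong_mod_def)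
  finally show ?thesis
    by (simp add: cong_mod_def of_nat_eq_zpi_of)
qed

lemma pi_coeff_trunc_cong:
  assumes "eisenstein P" "pi_coeff P u b" "pi_coeff P u' b" "n \<ge> 1"
  shows "cong_pow2 P 1 (trunc n u') (trunc n u)"
  using pi_coeff_cong[OF assms(1,2,4)] pi_coeff_cong[OF assms(1,3,4)]
  by (metis multiples.cong_sym multiples.cong_trans)

lemma o_unit_trunc_inverse:
  assumes "o_unit P u"
  obtains v where "v \<in> O_carrier" "\<And>n. cong_pow2 P n (trunc n u * trunc n v) 1"
proof -
  obtain v where v: "v \<in> O_carrier" "o_mul P u v = o_one" using assms by (auto simp: o_unit_def)
  have "cong_pow2 P n (trunc n u * trunc n v) 1" for n
  proof -
    have "cong_pow2 P n (trunc n u * trunc n v) (trunc n (o_mul P u v))"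
      by (rule multiples.cong_sym[OF trunc_mul])
    then show ?thesis using trunc_one[of P n] v(2) by (metis multiples.cong_trans)
  qed
  then show ?thesis using v(1) that by blast
qed

lemma pi_unit_trunc:
  assumes "eisenstein P" "o_unit P u" "n \<ge> 1"
  shows "pi_unit P (trunc n u)"
  using o_unit_trunc_inverse[OF assms(2)] pi_unit_of_cong_one[OF assms(1) _ assms(3)] by metis

text \<open>pi (fst P - pi) = snd P, so multiplying by a power of fst P - pi turns pi^r into
snd P ^ r, which is 2^r times a unit.\<close>

lemma not_pi_unit_of_pi_power_cong_zero:
  assumes eis: "eisenstein P" and cong: "cong_pow2 P (Suc r) (\<pi> ^ r * y) 0"
  shows "\<not> pi_unit P y"
proof -
  obtain q where q: "snd P = 2 * q" "odd q" using eis by (rule eisensteinE)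
  define T where "T = of_int (fst P) - \<pi>"
  have "coords P (T ^ r * (\<pi> ^ r * y)) = coords P (of_int (snd P) ^ r * y)"
  proof -
    have "coords P (\<pi> * T) = coords P (of_int (snd P))" by (simp add: T_def \<pi>_def quad_mult_def)
    then have "coords P ((\<pi> * T) ^ r) = coords P (of_int (snd P) ^ r)"
      by (induction r) simp_all
    moreover have "T ^ r * (\<pi> ^ r * y) = (\<pi> * T) ^ r * y" by (simp add: power_mult_distrib algebra_simps)
    ultimately show ?thesis by simp
  qed
  moreover have "cong_pow2 P (Suc r) (T ^ r * (\<pi> ^ r * y)) 0"
    using multiples.cong_mult_left[OF cong] by simp
  ultimately have "2 ^ Suc r dvd fst (coords P (of_int (snd P) ^ r * y))"
    by (simp add: cong_mod_def multiples_def)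
  also have "fst (coords P (of_int (snd P) ^ r * y)) = 2 ^ r * (q ^ r * fst (coords P y))"
    by (simp only: coords_mult coords_of_int_power) (simp add: quad_mult_def q power_mult_distrib)
  finally have "2 dvd q ^ r * fst (coords P y)" by simp
  then show ?thesis using q(2) by (simp add: pi_unit_def)
qed

lemma o_unit_valuation_unique:
  assumes eis: "eisenstein P" and u: "o_unit P u" and u': "o_unit P u'"
    and eq: "o_mul P (o_pow P o_pi r) u = o_mul P (o_pow P o_pi r') u'"
  shows "r = r'"
proof -
  have False if "r < r'" "o_unit P u" "o_unit P u'"
    and eq: "o_mul P (o_pow P o_pi r) u = o_mul P (o_pow P o_pi r') u'" for r r' u u'
  proof -
    let ?n = "Suc r"
    have "cong_pow2 P ?n (\<pi> ^ r * trunc ?n u) (trunc ?n (o_mul P (o_pow P o_pi r) u))"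
      by (rule multiples.cong_sym[OF trunc_pi_power_mul])
    also have "\<dots> = trunc ?n (o_mul P (o_pow P o_pi r') u')" using eq by simp
    also have "cong_pow2 P ?n \<dots> (\<pi> ^ r' * trunc ?n u')" by (rule trunc_pi_power_mul)
    finally have "cong_pow2 P ?n (\<pi> ^ r * trunc ?n u) (\<pi> ^ r' * trunc ?n u')" .
    moreover have "\<pi> ^ r' = \<pi> ^ r * \<pi> ^ (r' - r)"
      using that(1) by (metis le_add_diff_inverse less_imp_le power_add)
    ultimately have "cong_pow2 P ?n (\<pi> ^ r * (trunc ?n u - \<pi> ^ (r' - r) * trunc ?n u')) 0"
      by (simp add: cong_mod_def right_diff_distrib mult.assoc)
    then have "\<not> pi_unit P (trunc ?n u - \<pi> ^ (r' - r) * trunc ?n u')"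
      by (rule not_pi_unit_of_pi_power_cong_zero[OF eis])
    moreover have "\<not> pi_unit P (\<pi> ^ (r' - r) * trunc ?n u')"
      using not_pi_unit_pi_power[OF eis] that(1) by simp
    ultimately show False
      using pi_unit_trunc[OF eis that(2)] by (simp add: pi_unit_def)
  qed
  then show ?thesis using u u' eq by (metis linorder_neqE_nat)
qed

definition rep :: "nat \<Rightarrow> zpi" where
  "rep e = (if e = 0 then 0 else if e = 1 then 1 else 1 + \<pi>)"

definition rep_O :: "nat \<Rightarrow> oelt" where
  "rep_O e = (if e = 0 then o_zero else if e = 1 then o_one else (z2_of_int 1, z2_of_int 1))"

lemma rep_O_in_O: "rep_O e \<in> O_carrier"
  by (simp add: rep_O_def o_zero_O o_one_O o_const_O)

lemma trunc_rep_O: "cong_pow2 P n (trunc n (rep_O e)) (rep e)"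
proof -
  have "zpi_of (1, 1) = 1 + \<pi>" by (rule zpi_eqI) (simp add: \<pi>_def)
  then show ?thesis using trunc_one[of P n] trunc_const[of P n 1 1] by (simp add: rep_O_def rep_def)
qed

lemma pi_unit_rep: "e \<noteq> 0 \<Longrightarrow> pi_unit P (rep e)"
  by (simp add: rep_def pi_unit_def \<pi>_def)

lemma rep_power_cong:
  assumes eis: "eisenstein P" and m: "odd m"
  shows "cong_mod (pi5_ideal P) (rep e ^ (2 * m)) (pow_class e)"
proof -
  interpret pi5: ring_ideal "pi5_ideal P" using eis by (rule ring_ideal_pi5_eisenstein)
  obtain t where "m = 2 * t + 1" using m by (rule oddE)
  then have t: "2 * m = 2 + 4 * t" by simp
  have "(1 + \<pi>) ^ 2 * (1 + \<pi>) ^ 2 = (1 + \<pi>) ^ 4" by (simp flip: power_add)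
  then have "(1 + \<pi>) ^ (2 * m) = (1 + \<pi>) ^ 2 * ((1 + \<pi>) ^ 2 * (1 + \<pi>) ^ 2) ^ t"
    by (simp only: t power_add power_mult)
  also have "cong_mod (pi5_ideal P) \<dots> ((1 + \<pi>) ^ 2 * 1 ^ t)"
    by (intro pi5.cong_mult pi5.cong_refl pi5.cong_power sq_one_plus_pi_square[OF eis])
  finally have "cong_mod (pi5_ideal P) ((1 + \<pi>) ^ (2 * m)) ((1 + \<pi>) ^ 2)" by simp
  moreover have "(0::zpi) ^ (2 * m) = 0" using odd_pos[OF m] by (simp add: power_0_left)
  ultimately show ?thesis by (simp add: rep_def pow_class_def)
qed

lemma pi5_solvable_reps:
  assumes eis: "eisenstein P" and m: "odd m" and sol: "pi5_solvable P c"
  obtains e h where "h < 4" "e h \<noteq> 0" "(\<Sum>k<5. c k * rep (e k) ^ (2 * m)) \<in> pi5_ideal P"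
proof -
  interpret pi5: ring_ideal "pi5_ideal P" using eis by (rule ring_ideal_pi5_eisenstein)
  obtain e where e: "\<exists>h<4. e h \<noteq> 0" "(\<Sum>k<5. c k * pow_class (e k)) \<in> pi5_ideal P"
    using sol unfolding pi5_solvable_def by blast
  have "cong_mod (pi5_ideal P) (\<Sum>k<5. c k * rep (e k) ^ (2 * m)) (\<Sum>k<5. c k * pow_class (e k))"
    by (intro pi5.cong_sum pi5.cong_mult pi5.cong_refl rep_power_cong eis m)
  then have "(\<Sum>k<5. c k * rep (e k) ^ (2 * m)) \<in> pi5_ideal P"
    using e(2) pi5.cong_trans cong_mod_0_iff by metis
  then show ?thesis using e(1) that by blast
qed

lemma set_unit_residues: "set unit_residues = {1, 3, 5, 7} \<times> {0, 1, 2, 3}"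
  by (auto simp: unit_residues_def)

lemma res_pi5_unit_residues: "odd a \<Longrightarrow> res_pi5 (a, b) \<in> set unit_residues"
proof -
  assume "odd a"
  then have "a mod 8 = 1 \<or> a mod 8 = 3 \<or> a mod 8 = 5 \<or> a mod 8 = 7" by presburger
  moreover have "b mod 4 = 0 \<or> b mod 4 = 1 \<or> b mod 4 = 2 \<or> b mod 4 = 3" by presburger
  ultimately show ?thesis unfolding set_unit_residues res_pi5_def
    by (simp only: fst_conv snd_conv mem_Times_iff insert_iff empty_iff simp_thms)
qed

lemma res_pi5_unit_residues_parity: "odd a \<Longrightarrow> res_pi5 (a, b) \<in> set (unit_residues_parity (b mod 2))"
  using res_pi5_unit_residues[of a b]
  by (simp add: unit_residues_parity_def res_pi5_def mod_mod_cancel)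

lemma res_pi5_of_cong_mod_2:
  assumes "cong_pow2 P 1 x y" "pi_unit P y"
  shows "res_pi5 (coords P x) \<in> set (unit_residues_parity (snd (coords P y) mod 2))"
proof -
  have "odd (fst (coords P x))" "snd (coords P x) mod 2 = snd (coords P y) mod 2"
    using assms cong_pow2_iff[of P 1 x y] by (auto simp: pi_unit_def odd_iff_mod_2_eq_one)
  then show ?thesis using res_pi5_unit_residues_parity by (metis prod.collapse)
qed

lemma res_pi5_pi_power_mult:
  assumes eis: "eisenstein P" and tab: "pi_power_table P" and j: "j \<in> {2, 3, 4}"
    and y: "pi_unit P y"
  shows "res_pi5 (coords P (\<pi> ^ j * y)) \<in> set even_nonzero_residues"
proof -
  interpret pi5: ring_ideal "pi5_ideal P" using eis by (rule ring_ideal_pi5_eisenstein)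
  define \<rho> where "\<rho> = res_pi5 (coords P y)"
  have "\<rho> \<in> set unit_residues"
    using y res_pi5_unit_residues unfolding \<rho>_def pi_unit_def by (metis prod.collapse)
  then have "res_pi5 (quad_mult P (pi_coords P j) \<rho>) \<in> set even_nonzero_residues"
    using tab j unfolding pi_power_table_def list_all_iff by auto
  moreover have "cong_mod (pi5_ideal P) (\<pi> ^ j * y) (\<pi> ^ j * zpi_of \<rho>)"
    unfolding \<rho>_def by (intro pi5.cong_mult_left pi5.cong_sym[OF cong_pi5_res])
  ultimately show ?thesis by (simp add: cong_pi5_iff coords_pi_power)
qed

lemma pi5_solvable_unit_form:
  fixes u :: "nat \<Rightarrow> oelt"
  assumes eis: "eisenstein P" and cert: "pi5_certificate P" and tab: "pi_power_table P"
    and u: "\<forall>k<5. o_unit P (u k)"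
    and c: "pi_coeff P (u 0) c" "pi_coeff P (u 1) c"
    and c': "pi_coeff P (u 2) c'" "pi_coeff P (u 3) c'"
    and j: "j \<in> {2, 3, 4}"
  shows "pi5_solvable P (\<lambda>k. \<pi> ^ (if k = 4 then j else 0) * trunc 3 (u k))"
proof -
  have "o_unit P (u 0)" using u by simp
  then obtain v where "v \<in> O_carrier" and v: "\<And>n. cong_pow2 P n (trunc n (u 0) * trunc n v) 1"
    using o_unit_trunc_inverse by blast
  define w where "w = trunc 3 v"
  define x where "x k = w * (\<pi> ^ (if k = 4 then j else 0) * trunc 3 (u k))" for k
  have w: "cong_pow2 P 3 (w * trunc 3 (u 0)) 1" using v[of 3] by (simp add: w_def mult.commute)
  have x_unit: "pi_unit P (x k)" if "k < 4" for k
    using pi_unit_of_cong_one[OF eis w] pi_unit_trunc[OF eis u[rule_format]] that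
    by (simp add: x_def pi_unit_mult eis)
  have pair_cong: "cong_pow2 P 1 (x k') (x k)"
    if "pi_coeff P (u k) b" "pi_coeff P (u k') b" "k < 4" "k' < 4" for k k' b
  proof -
    have "cong_pow2 P 1 (trunc 3 (u k')) (trunc 3 (u k))"
      by (rule pi_coeff_trunc_cong[OF eis that(1,2)]) simp
    then show ?thesis using that(3,4) by (simp add: x_def multiples.cong_mult_left)
  qed
  have x0: "cong_pow2 P 3 (x 0) 1" using w by (simp add: x_def)
  have "pi5_solvable P x"
  proof (rule pi5_solvable_of_residues[OF eis cert])
    show "cong_mod (pi5_ideal P) (x 0) 1" by (rule cong_pi5_of_cong_pow2[OF x0])
    show "res_pi5 (coords P (x 1)) \<in> set (unit_residues_parity 0)"
      using res_pi5_of_cong_mod_2[OF multiples.cong_trans[OF pair_cong[OF c] cong_pow2_mono[OF _ x0]]]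
      by (simp add: pi_unit_def)
    show "res_pi5 (coords P (x 2)) \<in> set unit_residues"
    proof -
      have "odd (fst (coords P (x 2)))" using x_unit[of 2] by (simp add: pi_unit_def)
      then show ?thesis using res_pi5_unit_residues by (metis prod.collapse)
    qed
    show "res_pi5 (coords P (x 3)) \<in> set (unit_residues_parity (snd (coords P (x 2)) mod 2))"
      using res_pi5_of_cong_mod_2[OF pair_cong[OF c'] x_unit] by simp
    show "res_pi5 (coords P (x 4)) \<in> set even_nonzero_residues"
      using res_pi5_pi_power_mult[OF eis tab j, of "w * trunc 3 (u 4)"]
        pi_unit_of_cong_one[OF eis w] pi_unit_trunc[OF eis u[rule_format, of 4]]
      by (simp add: x_def pi_unit_mult eis ac_simps)
  qed
  then have "pi5_solvable P (\<lambda>k. w * (\<pi> ^ (if k = 4 then j else 0) * trunc 3 (u k)))"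
    by (simp add: x_def[abs_def])
  moreover have "cong_mod (pi5_ideal P) (trunc 3 (u 0) * w) 1"
    using cong_pi5_of_cong_pow2[OF w] by (simp add: mult.commute)
  ultimately show ?thesis by (rule pi5_solvable_scale[OF eis, rotated])
qed

section \<open>The six ramified quadratic extensions\<close>

lemma ramified_params_cases:
  "P \<in> ramified_params \<longleftrightarrow>
     P = (0, -2) \<or> P = (0, 2) \<or> P = (0, -10) \<or> P = (0, 10) \<or> P = (2, 2) \<or> P = (2, 6)"
  by (simp add: ramified_params_def)

lemma ramified_params_eisenstein: "P \<in> ramified_params \<Longrightarrow> eisenstein P"
  by (auto simp: ramified_params_cases eisenstein_def)

lemma ramified_params_pi5_certificate: "P \<in> ramified_params \<Longrightarrow> pi5_certificate P"
proof -
  have "pi5_certificate (0, -2)" "pi5_certificate (0, 2)" "pi5_certificate (0, -10)"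
    "pi5_certificate (0, 10)" "pi5_certificate (2, 2)" "pi5_certificate (2, 6)"
    by code_simp+
  then show "P \<in> ramified_params \<Longrightarrow> pi5_certificate P" by (auto simp: ramified_params_cases)
qed

lemma ramified_params_pi_power_table: "P \<in> ramified_params \<Longrightarrow> pi_power_table P"
proof -
  have "pi_power_table (0, -2)" "pi_power_table (0, 2)" "pi_power_table (0, -10)"
    "pi_power_table (0, 10)" "pi_power_table (2, 2)" "pi_power_table (2, 6)"
    by code_simp+
  then show "P \<in> ramified_params \<Longrightarrow> pi_power_table P" by (auto simp: ramified_params_cases)
qed

lemma unit_form_zero:
  fixes u :: "nat \<Rightarrow> oelt"
  assumes eis: "eisenstein P" and cert: "pi5_certificate P" and tab: "pi_power_table P"
    and m: "odd m" and u: "\<forall>k<5. o_unit P (u k)"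
    and c: "pi_coeff P (u 0) c" "pi_coeff P (u 1) c"
    and c': "pi_coeff P (u 2) c'" "pi_coeff P (u 3) c'"
    and j: "j \<in> {2, 3, 4}"
  obtains Y h where "\<And>k. Y k \<in> O_carrier" "h < 5" "\<And>n. n \<ge> 1 \<Longrightarrow> pi_unit P (trunc n (Y h))"
    "\<And>n. cong_pow2 P n
       (\<Sum>k<5. \<pi> ^ (if k = 4 then j else 0) * trunc n (u k) * trunc n (Y k) ^ (2 * m)) 0"
proof -
  define cf where "cf n k = \<pi> ^ (if k = 4 then j else 0) * trunc n (u k)" for n k
  obtain e h where h: "h < 4" "e h \<noteq> 0"
    and sol: "(\<Sum>k<5. cf 3 k * rep (e k) ^ (2 * m)) \<in> pi5_ideal P"
    using pi5_solvable_reps[OF eis m pi5_solvable_unit_form[OF eis cert tab u c c' j]]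
    unfolding cf_def by blast
  have cf_compat: "cong_pow2 P n (cf (Suc n) k) (cf n k)" if "k < 5" for n k
    using u that unfolding cf_def o_unit_def by (intro multiples.cong_mult_left trunc_compat) auto
  have cf_unit: "pi_unit P (cf n h)" if "n \<ge> 1" for n
    using pi_unit_trunc[OF eis u[rule_format] that] h by (simp add: cf_def)
  have "\<exists>z\<in>O_carrier. \<forall>n. cong_pow2 P n
      (\<Sum>k<5. cf n k * (if k = h then rep (e h) * (1 + 2 * \<pi> * trunc n z) else rep (e k)) ^ (2 * m)) 0"
    using hensel_lift[where c = cf and y = "\<lambda>k. rep (e k)" and i = h and N = 5, OF eis m cf_compat]
      h cf_unit pi_unit_rep[OF h(2)] sol by simp
  then obtain z where "z \<in> O_carrier" and z: "\<And>n. cong_pow2 P n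
      (\<Sum>k<5. cf n k * (if k = h then rep (e h) * (1 + 2 * \<pi> * trunc n z) else rep (e k)) ^ (2 * m)) 0"
    by blast
  define Y where "Y k = (if k = h then o_mul P (rep_O (e h)) (o_add o_one (o_mul P (z2_of_int 0, z2_of_int 2) z))
                        else rep_O (e k))" for k
  have Y_O: "Y k \<in> O_carrier" for k
    using \<open>z \<in> O_carrier\<close> by (simp add: Y_def rep_O_in_O o_mul_O o_add_O o_one_O o_const_O)
  have trunc_Y: "cong_pow2 P n (trunc n (Y k))
      (if k = h then rep (e h) * (1 + 2 * \<pi> * trunc n z) else rep (e k))" for n k
  proof -
    have "zpi_of (0, 2) = 2 * \<pi>" by (rule zpi_eqI) (simp add: \<pi>_def quad_mult_def)
    then have "cong_pow2 P n (trunc n (o_mul P (z2_of_int 0, z2_of_int 2) z)) (2 * \<pi> * trunc n z)"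
      using multiples.cong_trans[OF trunc_mul multiples.cong_mult[OF trunc_const multiples.cong_refl]]
      by metis
    then show ?thesis unfolding Y_def
      by (auto intro: trunc_rep_O multiples.cong_trans[OF trunc_mul multiples.cong_mult[OF trunc_rep_O]]
          multiples.cong_trans[OF trunc_add multiples.cong_add[OF trunc_one]])
  qed
  show ?thesis
  proof (rule that[OF Y_O])
    show "h < 5" using h by simp
    show "pi_unit P (trunc n (Y h))" if "n \<ge> 1" for n
      using pi_unit_cong[OF that trunc_Y[of n h]]
        pi_unit_mult[OF eis pi_unit_rep[OF h(2)] pi_unit_one_plus_2pi[OF eis]]
      by simp
    show "cong_pow2 P n
        (\<Sum>k<5. \<pi> ^ (if k = 4 then j else 0) * trunc n (u k) * trunc n (Y k) ^ (2 * m)) 0" for n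
      using multiples.cong_trans[OF multiples.cong_sum[OF multiples.cong_mult[OF multiples.cong_refl
            multiples.cong_power[OF trunc_Y]]] z[of n]]
      by (simp add: cf_def)
  qed
qed

section \<open>Reduction to the unit form\<close>

lemma common_exponents:
  fixes r \<delta> :: "nat \<Rightarrow> nat"
  assumes d: "d > 0" and r: "\<And>k. k < N \<Longrightarrow> r k mod d = (l + \<delta> k) mod d"
  obtains t E where "\<And>k. k < N \<Longrightarrow> r k + d * t k = E + \<delta> k"
proof -
  define E where "E = l + d * (\<Sum>k<N. r k)"
  have "r k + d * ((E + \<delta> k - r k) div d) = E + \<delta> k" if k: "k < N" for k
  proof -
    have "r k \<le> (\<Sum>k<N. r k)" using k by (intro member_le_sum) auto
    also have "\<dots> \<le> d * (\<Sum>k<N. r k)" using d by simp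
    finally have le: "r k \<le> E + \<delta> k" by (simp add: E_def)
    have "E + \<delta> k = (l + \<delta> k) + d * (\<Sum>k<N. r k)" by (simp add: E_def)
    then have "(E + \<delta> k) mod d = (l + \<delta> k) mod d" by (simp only: mod_mult_self2)
    then have "(E + \<delta> k) mod d = r k mod d" using r[OF k] by simp
    then have "d dvd E + \<delta> k - r k" using mod_eq_dvd_iff_nat[OF le] by blast
    then have "d * ((E + \<delta> k - r k) div d) = E + \<delta> k - r k" by (rule dvd_mult_div_cancel)
    then show ?thesis using le by linarith
  qed
  then show ?thesis by (rule that)
qed

lemma trunc_form_sum_restrict:
  assumes d: "d > 0" and ii: "inj_on ii {..<N}" "ii ` {..<N} \<subseteq> {..<s}"
    and x0: "\<And>i. i \<notin> ii ` {..<N} \<Longrightarrow> x i = o_zero"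
  shows "cong_pow2 P n (trunc n (o_sum (\<lambda>i. o_mul P (a i) (o_pow P (x i) d)) s))
           (\<Sum>k<N. trunc n (a (ii k)) * trunc n (x (ii k)) ^ d)"
proof -
  have "cong_pow2 P n (trunc n (o_sum (\<lambda>i. o_mul P (a i) (o_pow P (x i) d)) s))
          (\<Sum>i<s. trunc n (a i) * trunc n (x i) ^ d)"
    by (rule multiples.cong_trans[OF trunc_sum multiples.cong_sum[OF
          multiples.cong_trans[OF trunc_mul multiples.cong_mult[OF multiples.cong_refl trunc_pow]]]])
  also have "(\<Sum>i<s. trunc n (a i) * trunc n (x i) ^ d)
      = (\<Sum>i\<in>ii ` {..<N}. trunc n (a i) * trunc n (x i) ^ d)"
    using ii(2) x0 d by (intro sum.mono_neutral_right) (auto simp: power_0_left)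
  also have "\<dots> = (\<Sum>k<N. trunc n (a (ii k)) * trunc n (x (ii k)) ^ d)"
    by (rule sum.reindex[OF ii(1), unfolded comp_def])
  finally show ?thesis .
qed

lemma power_rescale:
  fixes p U Y :: "'a::comm_semiring_1"
  assumes "r + d * t = E + \<delta>"
  shows "p ^ r * U * (p ^ t * Y) ^ d = p ^ E * (p ^ \<delta> * U * Y ^ d)"
proof -
  have "(p ^ t * Y) ^ d = p ^ (d * t) * Y ^ d"
    by (simp add: power_mult_distrib mult.commute flip: power_mult)
  then have "p ^ r * U * (p ^ t * Y) ^ d = p ^ (r + d * t) * (U * Y ^ d)"
    by (simp add: power_add ac_simps)
  then show ?thesis by (simp add: assms power_add ac_simps)
qed

lemma form_zero_of_unit_form:
  fixes ii r \<delta> :: "nat \<Rightarrow> nat" and u Y :: "nat \<Rightarrow> oelt"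
  assumes eis: "eisenstein P" and d: "d > 0" and a_in: "\<And>i. i < s \<Longrightarrow> a i \<in> O_carrier"
    and ii: "inj_on ii {..<N}" "ii ` {..<N} \<subseteq> {..<s}"
    and a: "\<And>k. k < N \<Longrightarrow> a (ii k) = o_mul P (o_pow P o_pi (r k)) (u k)"
    and levels: "\<And>k. k < N \<Longrightarrow> r k mod d = (l + \<delta> k) mod d"
    and Y: "\<And>k. Y k \<in> O_carrier" and h: "h < N" "\<And>n. n \<ge> 1 \<Longrightarrow> pi_unit P (trunc n (Y h))"
    and zero: "\<And>n. cong_pow2 P n (\<Sum>k<N. \<pi> ^ \<delta> k * trunc n (u k) * trunc n (Y k) ^ d) 0"
  shows "\<exists>x. (\<forall>i<s. x i \<in> O_carrier) \<and> (\<exists>i<s. x i \<noteq> o_zero) \<and>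
             o_sum (\<lambda>i. o_mul P (a i) (o_pow P (x i) d)) s = o_zero"
proof -
  obtain t E where exps: "\<And>k. k < N \<Longrightarrow> r k + d * t k = E + \<delta> k"
    using common_exponents[of d N r l \<delta>] d levels by blast
  define X where "X k = o_mul P (o_pow P o_pi (t k)) (Y k)" for k
  define x where "x i = (if i \<in> ii ` {..<N} then X (inv_into {..<N} ii i) else o_zero)" for i
  have x_ii: "x (ii k) = X k" if "k < N" for k using ii(1) that by (simp add: x_def)
  have x_O: "x i \<in> O_carrier" for i by (simp add: x_def X_def o_mul_O o_pow_O o_pi_O Y o_zero_O)
  define S where "S = o_sum (\<lambda>i. o_mul P (a i) (o_pow P (x i) d)) s"
  have "cong_pow2 P n (trunc n S) (trunc n o_zero)" for n
  proof -
    have "cong_pow2 P n (trunc n S) (\<Sum>k<N. trunc n (a (ii k)) * trunc n (x (ii k)) ^ d)"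
      unfolding S_def by (rule trunc_form_sum_restrict[OF d ii]) (simp add: x_def)
    also have "cong_pow2 P n \<dots> (\<Sum>k<N. \<pi> ^ r k * trunc n (u k) * (\<pi> ^ t k * trunc n (Y k)) ^ d)"
    proof (rule multiples.cong_sum)
      fix k assume "k \<in> {..<N}"
      then have k: "k < N" by simp
      show "cong_pow2 P n (trunc n (a (ii k)) * trunc n (x (ii k)) ^ d)
              (\<pi> ^ r k * trunc n (u k) * (\<pi> ^ t k * trunc n (Y k)) ^ d)"
        unfolding a[OF k] x_ii[OF k] X_def
        by (intro multiples.cong_mult multiples.cong_power trunc_pi_power_mul)
    qed
    also have "\<dots> = \<pi> ^ E * (\<Sum>k<N. \<pi> ^ \<delta> k * trunc n (u k) * trunc n (Y k) ^ d)"
      using exps by (simp add: sum_distrib_left power_rescale)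
    also have "cong_pow2 P n \<dots> 0"
      using multiples.cong_mult_left[OF zero, where c = "\<pi> ^ E"] by simp
    finally show ?thesis by simp
  qed
  moreover have "S \<in> O_carrier"
    unfolding S_def using a_in by (auto intro!: o_sum_O o_mul_O o_pow_O x_O)
  ultimately have "S = o_zero" by (intro O_eqI[OF _ o_zero_O])
  moreover have "x (ii h) \<noteq> o_zero"
  proof
    assume "x (ii h) = o_zero"
    then have "o_mul P (o_pow P o_pi (t h)) (Y h) = o_zero" using x_ii[OF h(1)] by (simp add: X_def)
    then have "cong_pow2 P (Suc (t h)) (\<pi> ^ t h * trunc (Suc (t h)) (Y h)) 0"
      using multiples.cong_sym[OF trunc_pi_power_mul[of P "Suc (t h)" "t h" "Y h"]] by simp
    then show False using not_pi_unit_of_pi_power_cong_zero[OF eis] h(2)[of "Suc (t h)"] by simp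
  qed
  ultimately show ?thesis using x_O ii(2) h(1) unfolding S_def by blast
qed

lemma level_coeff_level_unique:
  assumes "eisenstein P" "level_coeff P d x k c" "level_coeff P d x k' c'"
  shows "k = k'"
  using assms o_unit_valuation_unique unfolding level_coeff_def by metis

lemma five_coefficients:
  fixes a :: "nat \<Rightarrow> oelt"
  assumes eis: "eisenstein P" and d: "d > 4" and kk: "kk < d"
    and dist: "distinct [i0, i1, i2, i3]"
    and lc: "level_coeff P d (a i0) kk c" "level_coeff P d (a i1) kk c"
      "level_coeff P d (a i2) kk c'" "level_coeff P d (a i3) kk c'"
    and j: "j \<in> {2, 3, 4}" and l: "level_coeff P d (a i4) ((kk + j) mod d) c''"
  obtains ii :: "nat \<Rightarrow> nat" and u :: "nat \<Rightarrow> oelt" and r :: "nat \<Rightarrow> nat"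
  where "inj_on ii {..<5}" "ii ` {..<5} = {i0, i1, i2, i3, i4}"
    "\<forall>k<5. o_unit P (u k)" "\<And>k. k < 5 \<Longrightarrow> a (ii k) = o_mul P (o_pow P o_pi (r k)) (u k)"
    "\<And>k. k < 5 \<Longrightarrow> r k mod d = (kk + (if k = 4 then j else 0)) mod d"
    "pi_coeff P (u 0) c" "pi_coeff P (u 1) c" "pi_coeff P (u 2) c'" "pi_coeff P (u 3) c'"
proof -
  have j24: "2 \<le> j" "j \<le> 4" using j by auto
  have "(kk + j) mod d \<noteq> kk"
  proof (cases "kk + j < d")
    case False
    then have "(kk + j) mod d = kk + j - d" using kk j24 d by (simp add: le_mod_geq)
    then show ?thesis using False j24 d by simp
  qed (use j24 in simp)
  then have "i4 \<noteq> i" if "i \<in> {i0, i1, i2, i3}" for i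
    using that lc level_coeff_level_unique[OF eis l] by blast
  then have dist5: "distinct [i0, i1, i2, i3, i4]" using dist by auto
  define ii where "ii k = [i0, i1, i2, i3, i4] ! k" for k
  define lev where "lev k = (kk + (if k = 4 then j else 0)) mod d" for k :: nat
  define cf where "cf k = [c, c, c', c', c''] ! k" for k
  have "level_coeff P d (a (ii k)) (lev k) (cf k)" if "k < 5" for k
    using less_5_cases[OF that] lc l kk by (auto simp: ii_def lev_def cf_def)
  then have "\<exists>r u. k < 5 \<longrightarrow> o_unit P u \<and>
      a (ii k) = o_mul P (o_pow P o_pi r) u \<and> r mod d = lev k \<and> pi_coeff P u (cf k)" for k
    unfolding level_coeff_def by blast
  then have "\<forall>k. \<exists>p. k < 5 \<longrightarrow> o_unit P (snd p) \<and>
      a (ii k) = o_mul P (o_pow P o_pi (fst p)) (snd p) \<and> fst p mod d = lev k \<and> pi_coeff P (snd p) (cf k)"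
    by simp
  from choice[OF this] obtain p where p: "\<And>k. k < 5 \<Longrightarrow> o_unit P (snd (p k)) \<and>
      a (ii k) = o_mul P (o_pow P o_pi (fst (p k))) (snd (p k)) \<and>
      fst (p k) mod d = lev k \<and> pi_coeff P (snd (p k)) (cf k)"
    by blast
  show ?thesis
  proof (rule that[where ii = ii and r = "\<lambda>k. fst (p k)" and u = "\<lambda>k. snd (p k)"])
    show "inj_on ii {..<5}" unfolding ii_def using dist5 by (simp add: inj_on_nth)
    show "ii ` {..<5} = {i0, i1, i2, i3, i4}"
      using nth_image[of 5 "[i0, i1, i2, i3, i4]"] by (simp add: ii_def atLeast0LessThan)
    show "pi_coeff P (snd (p 0)) c" "pi_coeff P (snd (p 1)) c"
      "pi_coeff P (snd (p 2)) c'" "pi_coeff P (snd (p 3)) c'"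
      using p[of 0] p[of 1] p[of 2] p[of 3] by (simp_all add: cf_def numeral_eq_Suc)
  qed (use p in \<open>simp_all add: lev_def\<close>)
qed

theorem lemma8:
  fixes P :: "int \<times> int" and m d s :: nat and a :: "nat \<Rightarrow> oelt"
  assumes K: "P \<in> ramified_params"
    and m_odd: "odd m" and m_ge: "m \<ge> 3" and d_def: "d = 2 * m"
    and a_in: "\<forall>i<s. a i \<in> O_carrier \<and> a i \<noteq> o_zero"
    and pairs: "\<exists>k<d. \<exists>i1<s. \<exists>i2<s. \<exists>j1<s. \<exists>j2<s. \<exists>c c'.
        distinct [i1, i2, j1, j2] \<and>
        level_coeff P d (a i1) k c \<and> level_coeff P d (a i2) k c \<and>
        level_coeff P d (a j1) k c' \<and> level_coeff P d (a j2) k c' \<and>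
        (\<exists>l<s. at_level P d (a l) ((k + 2) mod d) \<or> at_level P d (a l) ((k + 3) mod d)
               \<or> at_level P d (a l) ((k + 4) mod d))"
  shows "\<exists>x. (\<forall>i<s. x i \<in> O_carrier) \<and> (\<exists>i<s. x i \<noteq> o_zero) \<and>
             o_sum (\<lambda>i. o_mul P (a i) (o_pow P (x i) d)) s = o_zero"
proof -
  have eis: "eisenstein P" by (rule ramified_params_eisenstein[OF K])
  have d: "d > 4" using m_ge d_def by simp
  from pairs obtain kk i0 i1 i2 i3 i4 c c' where kk: "kk < d"
    and idx: "i0 < s" "i1 < s" "i2 < s" "i3 < s" "i4 < s" and dist: "distinct [i0, i1, i2, i3]"
    and lc: "level_coeff P d (a i0) kk c" "level_coeff P d (a i1) kk c"
      "level_coeff P d (a i2) kk c'" "level_coeff P d (a i3) kk c'"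
    and "at_level P d (a i4) ((kk + 2) mod d) \<or> at_level P d (a i4) ((kk + 3) mod d)
           \<or> at_level P d (a i4) ((kk + 4) mod d)"
    by blast
  then obtain j c'' where j: "j \<in> {2, 3, 4}" and l: "level_coeff P d (a i4) ((kk + j) mod d) c''"
    unfolding at_level_def by blast
  obtain ii :: "nat \<Rightarrow> nat" and u :: "nat \<Rightarrow> oelt" and r :: "nat \<Rightarrow> nat"
    where ii: "inj_on ii {..<5}" "ii ` {..<5} = {i0, i1, i2, i3, i4}"
    and u: "\<forall>k<5. o_unit P (u k)" and a: "\<And>k. k < 5 \<Longrightarrow> a (ii k) = o_mul P (o_pow P o_pi (r k)) (u k)"
    and levels: "\<And>k. k < 5 \<Longrightarrow> r k mod d = (kk + (if k = 4 then j else 0)) mod d"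
    and pc: "pi_coeff P (u 0) c" "pi_coeff P (u 1) c" "pi_coeff P (u 2) c'" "pi_coeff P (u 3) c'"
    using five_coefficients[OF eis d kk dist lc j l] by blast
  obtain Y :: "nat \<Rightarrow> oelt" and h :: nat
    where Y: "\<And>k. Y k \<in> O_carrier" "h < 5" "\<And>n. n \<ge> 1 \<Longrightarrow> pi_unit P (trunc n (Y h))"
    and zero: "\<And>n. cong_pow2 P n
      (\<Sum>k<5. \<pi> ^ (if k = 4 then j else 0) * trunc n (u k) * trunc n (Y k) ^ d) 0"
    using unit_form_zero[OF eis ramified_params_pi5_certificate[OF K]
        ramified_params_pi_power_table[OF K] m_odd u pc j, folded d_def] by blast
  show ?thesis
    by (rule form_zero_of_unit_form[where \<delta> = "\<lambda>k. if k = 4 then j else 0",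
          OF eis _ _ ii(1) _ a levels Y zero])
      (use d a_in idx ii(2) in auto)
qed

end
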